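(* Let $A\in\mathbb{C}^{N\times N}$ be nonsingular with Jordan decomposition $A=VJV^{-1}$, $V=[v_1,\ldots,v_N]$, $J=\mathrm{diag}\{J_{N_1}(\lambda_1),\ldots,J_{N_d}(\lambda_d)\}$, where $J_{N_i}(\lambda_i)$ is an $N_i\times N_i$ Jordan block. Let $\Gamma$ be a positively oriented simple closed curve in $\mathbb{C}$ passing through no eigenvalue of $A$, such that (after reordering blocks) $\lambda_1,\ldots,\lambda_k$ lie in the interior of $\Gamma$ and $\lambda_{k+1},\ldots,\lambda_d$ lie in its exterior, with $1\le k<d$. Let $s=N_1+\cdots+N_k$ and $$P_\Gamma=\frac{1}{2\pi\sqrt{-1}}\oint_\Gamma (zI-A)^{-1}\,dz .$$ Let $Y\in\mathbb{C}^{N\times s}$ be a random matrix whose entries are independent with a distribution absolutely continuous with respect to Lebesgue measure (e.g. Gaussian), and set $Z=P_\Gamma Y=\frac{1}{2\pi\sqrt{-1}}\oint_\Gamma (zI-A)^{-1}Y\,dz$. Then almost surely $Z$ has rank $s$, $Z^HAZ$ is invertible, and for $P=I-AZ(Z^HAZ)^{-1}Z^H$ the spectrum of $PA$ (with algebraic multiplicities) consists of the eigenvalue $0$ with multiplicity $s$ together with the eigenvalues of $A$ lying outside $\Gamma$, i.e. $\lambda_{k+1},\ldots,\lambda_d$ with multiplicities $N_{k+1},\ldots,N_d$ (the eigenvalues $\lambda_1,\ldots,\lambda_k$ inside $\Gamma$ are removed).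
   Context: $Z^H$ denotes the conjugate transpose of $Z$ and $I$ the $N\times N$ identity matrix. The eigenvalues $\lambda_i$ in $J$ need not be distinct. *)

theory Defs
  imports "HOL-Probability.Probability"
    "Jordan_Normal_Form.Jordan_Normal_Form"
    "Jordan_Normal_Form.Schur_Decomposition"
    "Jordan_Normal_Form.DL_Rank"
begin

definition mat_inv :: "complex mat \<Rightarrow> complex mat" where
  "mat_inv M = (THE B. B \<in> carrier_mat (dim_row M) (dim_row M) \<and>
                       inverts_mat M B \<and> inverts_mat B M)"

definition cint :: "(real \<Rightarrow> complex) \<Rightarrow> (complex \<Rightarrow> complex) \<Rightarrow> complex" where
  "cint g f = integral {0..1} (\<lambda>t. f (g t) * vector_derivative g (at t))"

text \<open>A positively oriented simple closed (piecewise smooth) curve: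
  winding number 1 around every point of its interior.\<close>
definition pos_simple_closed_curve :: "(real \<Rightarrow> complex) \<Rightarrow> bool" where
  "pos_simple_closed_curve g \<longleftrightarrow> valid_path g \<and> simple_path g \<and>
     pathfinish g = pathstart g \<and>
     (\<forall>w \<in> inside (path_image g). cint g (\<lambda>z. 1 / (z - w)) = 2 * pi * \<i>)"

definition riesz_proj :: "(real \<Rightarrow> complex) \<Rightarrow> nat \<Rightarrow> complex mat \<Rightarrow> complex mat" where
  "riesz_proj g N A = mat N N (\<lambda>(i,j).
      (1 / (2 * pi * \<i>)) * cint g (\<lambda>z. mat_inv (z \<cdot>\<^sub>m 1\<^sub>m N - A) $$ (i,j)))"

end

theory Submission
  imports Defs "HOL-Complex_Analysis.Complex_Analysis"
begin

text \<open>Write \<open>A = S J Q\<close> with \<open>J\<close> in Jordan form and \<open>Q = S\<^sup>-\<^sup>1\<close>. On each Jordan block \<open>\<lambda> + N\<close>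
  the resolvent is the finite Neumann series \<open>\<Sum>\<^sub>m N\<^sup>m / (z - \<lambda>)\<^sup>m\<^sup>+\<^sup>1\<close>, and the contour integral of
  \<open>(z - \<lambda>)\<^sup>-\<^sup>m\<^sup>-\<^sup>1\<close> is \<open>2\<pi>i\<close> for \<open>m = 0\<close> and \<open>\<lambda>\<close> inside \<open>\<Gamma>\<close> and \<open>0\<close> otherwise. Hence
  \<open>P\<^sub>\<Gamma> = S D Q\<close>, where the diagonal \<open>0/1\<close> matrix \<open>D = C\<^sup>T C\<close> selects the \<open>s\<close> positions whose
  eigenvalue lies inside \<open>\<Gamma>\<close>.

  If \<open>det (C Q Y) \<noteq> 0\<close>, then \<open>Z = P\<^sub>\<Gamma> Y\<close> has a left inverse \<open>L\<close> with \<open>Z L = P\<^sub>\<Gamma>\<close>, so \<open>Z\<close> spans the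
  invariant subspace; then \<open>Z\<^sup>H A Z\<close> is invertible and \<open>(I - A Z (Z\<^sup>H A Z)\<^sup>-\<^sup>1 Z\<^sup>H) A\<close> is similar
  to \<open>(I - P\<^sub>\<Gamma>) A\<close>, hence to \<open>J - D J\<close>: upper triangular, with the eigenvalues inside \<open>\<Gamma>\<close>
  replaced by \<open>0\<close>. Finally \<open>det (C Q Y)\<close> is affine in each entry of \<open>Y\<close> and not identically
  zero (take \<open>Y = S C\<^sup>T\<close>), so by Fubini it vanishes only on a null set when the entries are
  independent with atomless distributions.\<close>

section \<open>Contour integrals of inverse powers\<close>

lemma cint_eq_contour_integral:
  assumes vp: "valid_path g" and h: "(f has_contour_integral i) g"
  shows "cint g f = i"
proof -
  from vp obtain S where S: "finite S" and C1: "g C1_differentiable_on {0..1} - S"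
    unfolding valid_path_def piecewise_C1_differentiable_on_def by auto
  from C1 obtain D where D: "\<And>x. x \<in> {0..1} - S \<Longrightarrow> (g has_vector_derivative D x) (at x)"
    unfolding C1_differentiable_on_def by blast
  have "((\<lambda>t. f (g t) * vector_derivative g (at t)) has_integral i) {0..1}"
  proof (rule has_integral_spike_finite[OF S _ h[unfolded has_contour_integral_def]])
    fix x assume x: "x \<in> {0..1} - S"
    then have "vector_derivative g (at x) = D x" "vector_derivative g (at x within {0..1}) = D x"
      using D[OF x] by (auto intro: vector_derivative_at vector_derivative_at_within_ivl)
    then show "f (g x) * vector_derivative g (at x) = f (g x) * vector_derivative g (at x within {0..1})"
      by simp
  qed
  then show ?thesis unfolding cint_def by (rule integral_unique)
qed

lemma inverse_power_has_field_derivative: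
  fixes x w :: complex
  assumes "x \<noteq> w" "m > 0"
  shows "((\<lambda>z. - (1 / of_nat m) * (1 / (z - w)) ^ m) has_field_derivative (1 / (x - w)) ^ Suc m)
           (at x within S)"
proof -
  have "((\<lambda>z. - (1 / of_nat m) * (1 / (z - w)) ^ m) has_field_derivative
     - (1 / of_nat m) * (of_nat m * (1 / (x - w)) ^ (m - 1) * (- 1 / (x - w)^2))) (at x within S)"
    using assms by (auto intro!: derivative_eq_intros simp: power2_eq_square)
  moreover have "- (1 / of_nat m) * (of_nat m * (1 / (x - w)) ^ (m - 1) * (- 1 / (x - w)^2))
      = (1 / (x - w)) ^ Suc m"
  proof -
    have "\<And>k. (1 + of_nat k :: complex) \<noteq> 0" by (metis of_nat_Suc of_nat_neq_0)
    then show ?thesis using assms by (cases m) (auto simp: field_simps power2_eq_square)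
  qed
  ultimately show ?thesis by simp
qed

lemma has_contour_integral_inverse_power:
  assumes vp: "valid_path g" and cl: "pathfinish g = pathstart g" and w: "w \<notin> path_image g"
  shows "((\<lambda>z. (1 / (z - w)) ^ Suc m) has_contour_integral
           (if m = 0 then complex_of_real (2 * pi) * \<i> * winding_number g w else 0)) g"
proof (cases "m = 0")
  case True
  then show ?thesis using has_contour_integral_winding_number[OF vp w] by simp
next
  case False
  have "((\<lambda>z. (1 / (z - w)) ^ Suc m) has_contour_integral 0) g"
  proof (rule Cauchy_theorem_primitive[where S = "- {w}" and f = "\<lambda>z. - (1 / of_nat m) * (1 / (z - w)) ^ m"])
    fix x assume "x \<in> - {w}"
    then show "((\<lambda>z. - (1 / of_nat m) * (1 / (z - w)) ^ m) has_field_derivative (1 / (x - w)) ^ Suc m)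
        (at x within - {w})"
      using False by (intro inverse_power_has_field_derivative) auto
  qed (use w vp cl in auto)
  then show ?thesis using False by simp
qed

lemma pos_simple_closed_curve_winding_number:
  assumes c: "pos_simple_closed_curve g" and w: "w \<notin> path_image g"
  shows "winding_number g w = (if w \<in> inside (path_image g) then 1 else 0)"
proof -
  have vp: "valid_path g" and cl: "pathfinish g = pathstart g"
    using c unfolding pos_simple_closed_curve_def by auto
  show ?thesis
  proof (cases "w \<in> inside (path_image g)")
    case True
    then have "cint g (\<lambda>z. 1 / (z - w)) = 2 * pi * \<i>"
      using c unfolding pos_simple_closed_curve_def by auto
    moreover have "cint g (\<lambda>z. 1 / (z - w)) = complex_of_real (2 * pi) * \<i> * winding_number g w"
      by (rule cint_eq_contour_integral[OF vp has_contour_integral_winding_number[OF vp w]])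
    ultimately show ?thesis using True by (simp add: pi_neq_zero)
  next
    case False
    then have "w \<in> outside (path_image g)" using w by (auto simp: outside_inside)
    then show ?thesis
      using False winding_number_zero_in_outside[OF valid_path_imp_path[OF vp] cl] by auto
  qed
qed

lemma pos_simple_closed_curve_inverse_power:
  assumes "pos_simple_closed_curve g" and "w \<notin> path_image g"
  shows "((\<lambda>z. (1 / (z - w)) ^ Suc m) has_contour_integral
           (if m = 0 \<and> w \<in> inside (path_image g) then 2 * pi * \<i> else 0)) g"
proof -
  have "valid_path g" "pathfinish g = pathstart g"
    using assms(1) unfolding pos_simple_closed_curve_def by auto
  then have "((\<lambda>z. (1 / (z - w)) ^ Suc m) has_contour_integral
      (if m = 0 then complex_of_real (2 * pi) * \<i> * winding_number g w else 0)) g"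
    using assms(2) by (rule has_contour_integral_inverse_power)
  moreover have "(if m = 0 then complex_of_real (2 * pi) * \<i> * winding_number g w else 0)
      = (if m = 0 \<and> w \<in> inside (path_image g) then 2 * pi * \<i> else 0)"
    by (simp add: pos_simple_closed_curve_winding_number[OF assms])
  ultimately show ?thesis by simp
qed


lemma invertible_mat_obtain_inverse:
  fixes M :: "'a :: field mat"
  assumes M: "M \<in> carrier_mat n n" and "invertible_mat M"
  obtains B where "B \<in> carrier_mat n n" "B * M = 1\<^sub>m n" "M * B = 1\<^sub>m n"
proof -
  from assms(2) obtain B where "inverts_mat M B" "inverts_mat B M" unfolding invertible_mat_def by auto
  then have MB: "M * B = 1\<^sub>m n" and BM: "B * M = 1\<^sub>m (dim_row B)" using M unfolding inverts_mat_def by auto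
  have "dim_col B = n" using MB M by (metis index_mult_mat(3) index_one_mat(3))
  moreover have "dim_row B = n" using BM M by (metis index_mult_mat(3) index_one_mat(3) carrier_matD(2))
  ultimately show ?thesis using that MB BM by auto
qed

lemma invertible_mat_iff_det_nonzero:
  fixes M :: "'a :: field mat"
  assumes M: "M \<in> carrier_mat n n"
  shows "invertible_mat M \<longleftrightarrow> det M \<noteq> 0"
proof
  assume "invertible_mat M"
  then obtain B where B: "B \<in> carrier_mat n n" and "M * B = 1\<^sub>m n"
    using invertible_mat_obtain_inverse[OF M] by metis
  then have "det M * det B = 1" using det_mult[OF M B] by simp
  then show "det M \<noteq> 0" by auto
next
  assume "det M \<noteq> 0"
  then have "M \<in> Units (ring_mat TYPE('a) n undefined)" by (rule det_non_zero_imp_unit[OF M])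
  then obtain B where "B \<in> carrier_mat n n" "B * M = 1\<^sub>m n" "M * B = 1\<^sub>m n"
    unfolding Units_def ring_mat_def by auto
  then show "invertible_mat M"
    using M unfolding invertible_mat_def inverts_mat_def square_mat.simps by auto
qed

lemma mat_inv_eqI:
  assumes M: "M \<in> carrier_mat n n" and B: "B \<in> carrier_mat n n" and BM: "B * M = 1\<^sub>m n"
  shows "mat_inv M = B"
  unfolding mat_inv_def
proof (rule the_equality)
  have MB: "M * B = 1\<^sub>m n" using mat_mult_left_right_inverse[OF B M BM] .
  then show "B \<in> carrier_mat (dim_row M) (dim_row M) \<and> inverts_mat M B \<and> inverts_mat B M"
    using M B BM unfolding inverts_mat_def by auto
  fix B' assume "B' \<in> carrier_mat (dim_row M) (dim_row M) \<and> inverts_mat M B' \<and> inverts_mat B' M"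
  then have B': "B' \<in> carrier_mat n n" and "B' * M = 1\<^sub>m n" using M unfolding inverts_mat_def by auto
  then have "B' = B' * (M * B)" using MB by simp
  also have "\<dots> = (B' * M) * B" using B' M B by simp
  finally show "B' = B" using \<open>B' * M = 1\<^sub>m n\<close> B by simp
qed

lemma mat_inv:
  assumes M: "M \<in> carrier_mat n n" and "invertible_mat M"
  shows mat_inv_carrier: "mat_inv M \<in> carrier_mat n n"
    and mat_inv_mult_left: "mat_inv M * M = 1\<^sub>m n"
proof -
  obtain B where B: "B \<in> carrier_mat n n" "B * M = 1\<^sub>m n" "M * B = 1\<^sub>m n"
    using invertible_mat_obtain_inverse[OF assms] .
  then have "mat_inv M = B" by (intro mat_inv_eqI[OF M]) auto
  with B show "mat_inv M \<in> carrier_mat n n" "mat_inv M * M = 1\<^sub>m n" by auto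
qed

lemma mult3_mat_index:
  fixes S R Q :: "'a :: comm_semiring_0 mat"
  assumes "S \<in> carrier_mat n n" "R \<in> carrier_mat n n" "Q \<in> carrier_mat n n" "i < n" "j < n"
  shows "(S * R * Q) $$ (i,j) = (\<Sum>k\<in>{0..<n}. \<Sum>l\<in>{0..<n}. S $$ (i,k) * R $$ (k,l) * Q $$ (l,j))"
proof -
  have "(S * R * Q) $$ (i,j) = (\<Sum>k\<in>{0..<n}. S $$ (i,k) * (\<Sum>l\<in>{0..<n}. R $$ (k,l) * Q $$ (l,j)))"
    using assms by (simp add: scalar_prod_def)
  then show ?thesis by (simp add: sum_distrib_left mult.assoc)
qed


section \<open>Resolvents of Jordan matrices\<close>

definition jordan_shaped :: "'a :: zero mat \<Rightarrow> nat \<Rightarrow> bool" where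
  "jordan_shaped J n \<longleftrightarrow> J \<in> carrier_mat n n \<and>
     (\<forall>k l. k < n \<longrightarrow> l < n \<longrightarrow> J $$ (k,l) \<noteq> 0 \<longrightarrow> k \<le> l \<and> J $$ (k,k) = J $$ (l,l))"

lemma jordan_shaped_jordan_matrix:
  "jordan_shaped (jordan_matrix n_as :: 'a :: {zero,one} mat) (sum_list (map fst n_as))"
  unfolding jordan_shaped_def
proof (rule conjI[OF jordan_matrix_carrier], intro allI impI)
  fix k l assume "k < sum_list (map fst n_as)" "l < sum_list (map fst n_as)"
    "(jordan_matrix n_as :: 'a mat) $$ (k,l) \<noteq> 0"
  then show "k \<le> l \<and> jordan_matrix n_as $$ (k,k) = (jordan_matrix n_as :: 'a mat) $$ (l,l)"
  proof (induct n_as arbitrary: k l)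
    case (Cons na n_as)
    obtain n a where na: "na = (n,a)" by force
    let ?m = "sum_list (map fst n_as)"
    have kl: "k < n + ?m" "l < n + ?m" using Cons(2,3) na by auto
    have e: "\<And>i j. i < n + ?m \<Longrightarrow> j < n + ?m \<Longrightarrow> (jordan_matrix (na # n_as) :: 'a mat) $$ (i,j) =
       (if i < n then if j < n then jordan_block n a $$ (i,j) else 0
        else if j < n then 0 else jordan_matrix n_as $$ (i - n, j - n))"
      unfolding na jordan_matrix_Cons by (subst index_mat_four_block) auto
    show ?case
    proof (cases "k < n")
      case True
      then have "l < n" using Cons(4) e[OF kl] by (auto split: if_splits)
      then show ?thesis using True Cons(4) e[OF kl] e[OF kl(1) kl(1)] e[OF kl(2) kl(2)]
        by (auto simp: jordan_block_index split: if_splits)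
    next
      case False
      then have ln: "\<not> l < n" using Cons(4) e[OF kl] by (auto split: if_splits)
      have "k - n < ?m" "l - n < ?m" using kl False ln by auto
      moreover have "jordan_matrix n_as $$ (k - n, l - n) \<noteq> (0 :: 'a)" using Cons(4) False ln e[OF kl] by simp
      ultimately show ?thesis using Cons(1)[of "k - n" "l - n"] False ln e[OF kl(1) kl(1)] e[OF kl(2) kl(2)]
        by auto
    qed
  qed simp
qed

lemma diag_mat_jordan_matrix:
  "diag_mat (jordan_matrix n_as) = concat (map (\<lambda>(n,a). replicate n a) n_as)"
proof (induct n_as)
  case Nil
  then show ?case by (simp add: jordan_matrix_def diag_mat_def)
next
  case (Cons na n_as)
  obtain n a where na: "na = (n,a)" by force
  have "diag_mat (jordan_block n a) = replicate n a"
    by (rule nth_equalityI) (auto simp: diag_mat_def jordan_block_index)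
  then show ?case unfolding na jordan_matrix_Cons
    by (subst diag_four_block_mat[of _ n _ "sum_list (map fst n_as)"]) (auto simp: Cons)
qed

definition nilpotent_part :: "'a :: zero mat \<Rightarrow> 'a mat" where
  "nilpotent_part J = mat (dim_row J) (dim_row J) (\<lambda>(i,j). if i = j then 0 else J $$ (i,j))"

lemma nilpotent_part_carrier: "J \<in> carrier_mat n n \<Longrightarrow> nilpotent_part J \<in> carrier_mat n n"
  unfolding nilpotent_part_def by auto

lemma nilpotent_part_pow_nonzero:
  fixes J :: "'a :: semiring_1 mat"
  assumes js: "jordan_shaped J n" and "k < n" "l < n" "(nilpotent_part J ^\<^sub>m m) $$ (k,l) \<noteq> 0"
  shows "k + m \<le> l \<and> J $$ (k,k) = J $$ (l,l)"
  using assms(2-)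
proof (induct m arbitrary: l)
  case 0
  have "J \<in> carrier_mat n n" using js unfolding jordan_shaped_def by auto
  then show ?case using 0 by (auto simp: nilpotent_part_def split: if_splits)
next
  case (Suc m)
  have J: "J \<in> carrier_mat n n" using js unfolding jordan_shaped_def by auto
  have "(nilpotent_part J ^\<^sub>m Suc m) $$ (k,l)
      = (\<Sum>r\<in>{0..<n}. (nilpotent_part J ^\<^sub>m m) $$ (k,r) * nilpotent_part J $$ (r,l))"
    using Suc(2,3) nilpotent_part_carrier[OF J] by (simp add: scalar_prod_def)
  with Suc(4) obtain r where r: "r < n" "(nilpotent_part J ^\<^sub>m m) $$ (k,r) \<noteq> 0"
    "nilpotent_part J $$ (r,l) \<noteq> 0"
    by (metis (no_types, lifting) atLeastLessThan_iff mult_not_zero sum.neutral)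
  from Suc(1)[OF Suc(2) r(1,2)] have "k + m \<le> r \<and> J $$ (k,k) = J $$ (r,r)" .
  moreover have "r \<noteq> l" "J $$ (r,l) \<noteq> 0"
    using r Suc(3) J unfolding nilpotent_part_def by (auto split: if_splits)
  then have "r < l \<and> J $$ (r,r) = J $$ (l,l)" using js r(1) Suc(3) unfolding jordan_shaped_def by force
  ultimately show ?case by auto
qed

lemma nilpotent_part_pow_dim:
  fixes J :: "'a :: semiring_1 mat"
  assumes "jordan_shaped J n" "k < n" "l < n"
  shows "(nilpotent_part J ^\<^sub>m n) $$ (k,l) = 0"
  using nilpotent_part_pow_nonzero[OF assms, of n] assms(3) by auto

text \<open>The Neumann series of \<open>(z - J)\<^sup>-\<^sup>1\<close> for \<open>J = \<lambda> + N\<close>, taken entrywise: in row \<open>k\<close> the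
  relevant eigenvalue is \<open>J\<^sub>k\<^sub>k\<close>.\<close>
definition jordan_resolvent :: "'a :: field mat \<Rightarrow> 'a \<Rightarrow> 'a mat" where
  "jordan_resolvent J z = mat (dim_row J) (dim_row J) (\<lambda>(k,l).
      \<Sum>m<dim_row J. (nilpotent_part J ^\<^sub>m m) $$ (k,l) * (1 / (z - J $$ (k,k))) ^ Suc m)"

lemma nilpotent_part_pow_mult_index:
  fixes J :: "'a :: comm_ring_1 mat"
  assumes js: "jordan_shaped J n" and i: "i < n" and l: "l < n"
  shows "(\<Sum>k\<in>{0..<n}. (nilpotent_part J ^\<^sub>m m) $$ (i,k) * J $$ (k,l))
       = (nilpotent_part J ^\<^sub>m Suc m) $$ (i,l) + (nilpotent_part J ^\<^sub>m m) $$ (i,l) * J $$ (i,i)"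
proof -
  have J: "J \<in> carrier_mat n n" using js unfolding jordan_shaped_def by auto
  define P where "P = nilpotent_part J ^\<^sub>m m"
  have "P $$ (i,k) * J $$ (k,l) = P $$ (i,k) * nilpotent_part J $$ (k,l)
      + (if k = l then P $$ (i,l) * J $$ (i,i) else 0)" if "k < n" for k
  proof (cases "k = l")
    case True
    have "P $$ (i,l) * J $$ (l,l) = P $$ (i,l) * J $$ (i,i)"
      using nilpotent_part_pow_nonzero[OF js i l, of m] by (cases "P $$ (i,l) = 0") (auto simp: P_def)
    then show ?thesis using True l J unfolding nilpotent_part_def by simp
  qed (use that l J in \<open>simp add: nilpotent_part_def\<close>)
  then have "(\<Sum>k\<in>{0..<n}. P $$ (i,k) * J $$ (k,l))
      = (\<Sum>k\<in>{0..<n}. P $$ (i,k) * nilpotent_part J $$ (k,l)) + P $$ (i,l) * J $$ (i,i)"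
    using l by (simp add: sum.distrib)
  also have "(\<Sum>k\<in>{0..<n}. P $$ (i,k) * nilpotent_part J $$ (k,l)) = (nilpotent_part J ^\<^sub>m Suc m) $$ (i,l)"
    using i l nilpotent_part_carrier[OF J] unfolding P_def by (simp add: scalar_prod_def)
  finally show ?thesis unfolding P_def .
qed

lemma jordan_resolvent_inverse:
  fixes J :: "'a :: field mat"
  assumes js: "jordan_shaped J n" and z: "\<And>i. i < n \<Longrightarrow> z \<noteq> J $$ (i,i)"
  shows "jordan_resolvent J z * (z \<cdot>\<^sub>m 1\<^sub>m n - J) = 1\<^sub>m n"
proof -
  have J: "J \<in> carrier_mat n n" using js unfolding jordan_shaped_def by auto
  define P where "P m = nilpotent_part J ^\<^sub>m m" for m
  define R where "R = jordan_resolvent J z"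
  show ?thesis unfolding R_def[symmetric]
  proof (rule eq_matI)
    fix i l assume "i < dim_row (1\<^sub>m n :: 'a mat)" "l < dim_col (1\<^sub>m n :: 'a mat)"
    then have i: "i < n" and l: "l < n" by auto
    define d where "d = 1 / (z - J $$ (i,i))"
    have zd: "(z - J $$ (i,i)) * d = 1" using z[OF i] unfolding d_def by auto
    have Rik: "R $$ (i,k) = (\<Sum>m<n. d ^ Suc m * P m $$ (i,k))" if "k < n" for k
      using i that J unfolding R_def jordan_resolvent_def P_def d_def by (auto simp: mult.commute)
    have "(R * (z \<cdot>\<^sub>m 1\<^sub>m n - J)) $$ (i,l) = (\<Sum>k\<in>{0..<n}. R $$ (i,k) * ((if k = l then z else 0) - J $$ (k,l)))"
      using i l J unfolding R_def jordan_resolvent_def by (simp add: scalar_prod_def) (auto intro!: sum.cong)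
    also have "\<dots> = z * R $$ (i,l) - (\<Sum>k\<in>{0..<n}. R $$ (i,k) * J $$ (k,l))"
      using l by (simp add: right_diff_distrib sum_subtractf if_distrib[of "\<lambda>x. _ * x"] mult.commute cong: if_cong)
    also have "(\<Sum>k\<in>{0..<n}. R $$ (i,k) * J $$ (k,l)) = (\<Sum>m<n. d ^ Suc m * (\<Sum>k\<in>{0..<n}. P m $$ (i,k) * J $$ (k,l)))"
      by (simp add: Rik sum_distrib_left sum_distrib_right mult.assoc sum.swap[of _ "{0..<n}"])
    also have "\<dots> = (\<Sum>m<n. d ^ Suc m * (P (Suc m) $$ (i,l) + P m $$ (i,l) * J $$ (i,i)))"
      using nilpotent_part_pow_mult_index[OF js i l] unfolding P_def by simp
    also have "z * R $$ (i,l) - \<dots> = (\<Sum>m<n. P m $$ (i,l) * d ^ m - P (Suc m) $$ (i,l) * d ^ Suc m)"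
    proof -
      have "z * R $$ (i,l) = (\<Sum>m<n. z * (d ^ Suc m * P m $$ (i,l)))"
        by (simp add: Rik[OF l] sum_distrib_left)
      then have "z * R $$ (i,l) - (\<Sum>m<n. d ^ Suc m * (P (Suc m) $$ (i,l) + P m $$ (i,l) * J $$ (i,i)))
          = (\<Sum>m<n. z * (d ^ Suc m * P m $$ (i,l)) - d ^ Suc m * (P (Suc m) $$ (i,l) + P m $$ (i,l) * J $$ (i,i)))"
        by (simp add: sum_subtractf)
      also have "\<dots> = (\<Sum>m<n. P m $$ (i,l) * (d ^ m * ((z - J $$ (i,i)) * d)) - P (Suc m) $$ (i,l) * d ^ Suc m)"
        by (rule sum.cong[OF refl]) (simp add: algebra_simps)
      finally show ?thesis using zd by simp
    qed
    also have "\<dots> = P 0 $$ (i,l) * d ^ 0 - P n $$ (i,l) * d ^ n"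
      by (rule sum_lessThan_telescope')
    also have "\<dots> = 1\<^sub>m n $$ (i,l)"
      using nilpotent_part_pow_dim[OF js i l] i l nilpotent_part_carrier[OF J] unfolding P_def by simp
    finally show "(R * (z \<cdot>\<^sub>m 1\<^sub>m n - J)) $$ (i,l) = 1\<^sub>m n $$ (i,l)" .
  qed (use J in \<open>auto simp: R_def jordan_resolvent_def\<close>)
qed

lemma mat_inv_resolvent_similar:
  fixes S Q J A :: "complex mat"
  assumes S: "S \<in> carrier_mat n n" and Q: "Q \<in> carrier_mat n n" and js: "jordan_shaped J n"
    and SQ: "S * Q = 1\<^sub>m n" and QS: "Q * S = 1\<^sub>m n" and A: "A = S * J * Q"
    and z: "\<And>i. i < n \<Longrightarrow> z \<noteq> J $$ (i,i)"
  shows "mat_inv (z \<cdot>\<^sub>m 1\<^sub>m n - A) = S * jordan_resolvent J z * Q"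
proof -
  have J: "J \<in> carrier_mat n n" using js unfolding jordan_shaped_def by auto
  define R where "R = jordan_resolvent J z"
  have R: "R \<in> carrier_mat n n" using J unfolding R_def jordan_resolvent_def by auto
  have ZJ: "z \<cdot>\<^sub>m 1\<^sub>m n - J \<in> carrier_mat n n" using J by auto
  have shift: "z \<cdot>\<^sub>m 1\<^sub>m n - A = S * (z \<cdot>\<^sub>m 1\<^sub>m n - J) * Q"
  proof -
    have "S * (z \<cdot>\<^sub>m 1\<^sub>m n - J) = S * (z \<cdot>\<^sub>m 1\<^sub>m n) - S * J"
      by (rule mult_minus_distrib_mat[of S n n]) (use S J in auto)
    also have "S * (z \<cdot>\<^sub>m 1\<^sub>m n) = z \<cdot>\<^sub>m S"
      using mult_smult_distrib[OF S, of "1\<^sub>m n" n z] S by simp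
    finally have "S * (z \<cdot>\<^sub>m 1\<^sub>m n - J) = z \<cdot>\<^sub>m S - S * J" .
    then have "S * (z \<cdot>\<^sub>m 1\<^sub>m n - J) * Q = z \<cdot>\<^sub>m (S * Q) - S * J * Q"
      using S J Q by (simp add: minus_mult_distrib_mat[of _ n n] mult_smult_assoc_mat[of _ n n])
    then show ?thesis using SQ A by simp
  qed
  have "(S * R * Q) * (S * (z \<cdot>\<^sub>m 1\<^sub>m n - J) * Q) = S * ((R * (z \<cdot>\<^sub>m 1\<^sub>m n - J)) * Q)"
  proof -
    have "(S * R * Q) * (S * (z \<cdot>\<^sub>m 1\<^sub>m n - J) * Q) = S * (R * ((Q * S) * ((z \<cdot>\<^sub>m 1\<^sub>m n - J) * Q)))"
      using S Q R ZJ by (simp add: assoc_mult_mat[of _ n n _ n _ n])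
    then show ?thesis using S Q R ZJ QS left_mult_one_mat[of "(z \<cdot>\<^sub>m 1\<^sub>m n - J) * Q" n n]
      by (simp add: assoc_mult_mat[of _ n n _ n _ n])
  qed
  also have "\<dots> = 1\<^sub>m n" using jordan_resolvent_inverse[OF js z] S Q SQ unfolding R_def by simp
  finally show ?thesis unfolding shift R_def[symmetric] by (intro mat_inv_eqI) (use S Q R ZJ in auto)
qed


section \<open>The Riesz projector of a matrix in Jordan form\<close>

definition spectral_projector :: "'a :: {zero,one} mat \<Rightarrow> nat \<Rightarrow> 'a set \<Rightarrow> 'a mat" where
  "spectral_projector J n X = mat n n (\<lambda>(i,j). if i = j \<and> J $$ (i,i) \<in> X then 1 else 0)"

lemma jordan_resolvent_contour_integral:
  fixes J :: "complex mat"
  assumes js: "jordan_shaped J n" and c: "pos_simple_closed_curve g"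
    and on_path: "\<And>i. i < n \<Longrightarrow> J $$ (i,i) \<notin> path_image g" and k: "k < n" and l: "l < n"
  shows "((\<lambda>z. jordan_resolvent J z $$ (k,l)) has_contour_integral
           2 * pi * \<i> * spectral_projector J n (inside (path_image g)) $$ (k,l)) g"
proof -
  have J: "J \<in> carrier_mat n n" using js unfolding jordan_shaped_def by auto
  define P where "P m = nilpotent_part J ^\<^sub>m m" for m
  define c where "c = (if J $$ (k,k) \<in> inside (path_image g) then 2 * pi * \<i> else 0)"
  have "((\<lambda>z. \<Sum>m<n. P m $$ (k,l) * (1 / (z - J $$ (k,k))) ^ Suc m) has_contour_integral
      (\<Sum>m<n. P m $$ (k,l) * (if m = 0 \<and> J $$ (k,k) \<in> inside (path_image g) then 2 * pi * \<i> else 0))) g"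
    by (intro has_contour_integral_sum has_contour_integral_lmul pos_simple_closed_curve_inverse_power
        c on_path k) simp
  moreover have "(\<Sum>m<n. P m $$ (k,l) * (if m = 0 \<and> J $$ (k,k) \<in> inside (path_image g) then 2 * pi * \<i> else 0))
      = (\<Sum>m<n. if m = 0 then P 0 $$ (k,l) * c else 0)"
    unfolding c_def by (intro sum.cong) auto
  moreover have "P 0 $$ (k,l) * c = 2 * pi * \<i> * spectral_projector J n (inside (path_image g)) $$ (k,l)"
    using k l nilpotent_part_carrier[OF J] unfolding P_def c_def spectral_projector_def by simp
  ultimately show ?thesis using k l J unfolding jordan_resolvent_def P_def by simp
qed

lemma riesz_proj_similar_jordan:
  fixes A S Q J :: "complex mat"
  assumes S: "S \<in> carrier_mat n n" and Q: "Q \<in> carrier_mat n n" and js: "jordan_shaped J n"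
    and SQ: "S * Q = 1\<^sub>m n" and QS: "Q * S = 1\<^sub>m n" and A: "A = S * J * Q"
    and c: "pos_simple_closed_curve g" and on_path: "\<And>i. i < n \<Longrightarrow> J $$ (i,i) \<notin> path_image g"
  shows "riesz_proj g n A = S * spectral_projector J n (inside (path_image g)) * Q"
proof -
  have J: "J \<in> carrier_mat n n" using js unfolding jordan_shaped_def by auto
  have vp: "valid_path g" using c unfolding pos_simple_closed_curve_def by auto
  define D where "D = spectral_projector J n (inside (path_image g))"
  have D: "D \<in> carrier_mat n n" unfolding D_def spectral_projector_def by auto
  have R: "jordan_resolvent J z \<in> carrier_mat n n" for z
    using J unfolding jordan_resolvent_def by auto
  show ?thesis unfolding D_def[symmetric]
  proof (rule eq_matI)
    fix i j assume "i < dim_row (S * D * Q)" "j < dim_col (S * D * Q)"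
    then have i: "i < n" and j: "j < n" using S Q by auto
    have "((\<lambda>z. \<Sum>k\<in>{0..<n}. \<Sum>l\<in>{0..<n}. S $$ (i,k) * jordan_resolvent J z $$ (k,l) * Q $$ (l,j))
        has_contour_integral (\<Sum>k\<in>{0..<n}. \<Sum>l\<in>{0..<n}. S $$ (i,k) * (2 * pi * \<i> * D $$ (k,l)) * Q $$ (l,j))) g"
      unfolding D_def
      by (intro has_contour_integral_sum has_contour_integral_lmul has_contour_integral_rmul
          jordan_resolvent_contour_integral[OF js c on_path]) auto
    moreover have "mat_inv (z \<cdot>\<^sub>m 1\<^sub>m n - A) $$ (i,j)
        = (\<Sum>k\<in>{0..<n}. \<Sum>l\<in>{0..<n}. S $$ (i,k) * jordan_resolvent J z $$ (k,l) * Q $$ (l,j))"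
      if "z \<in> path_image g" for z
    proof -
      have "z \<noteq> J $$ (k,k)" if "k < n" for k using on_path[OF that] \<open>z \<in> path_image g\<close> by auto
      then show ?thesis
        using mat_inv_resolvent_similar[OF S Q js SQ QS A] mult3_mat_index[OF S R Q i j] by simp
    qed
    moreover have "(\<Sum>k\<in>{0..<n}. \<Sum>l\<in>{0..<n}. S $$ (i,k) * (2 * pi * \<i> * D $$ (k,l)) * Q $$ (l,j))
        = 2 * pi * \<i> * (S * D * Q) $$ (i,j)"
      using mult3_mat_index[OF S D Q i j] by (simp add: sum_distrib_left mult_ac)
    ultimately have "((\<lambda>z. mat_inv (z \<cdot>\<^sub>m 1\<^sub>m n - A) $$ (i,j)) has_contour_integral
        2 * pi * \<i> * (S * D * Q) $$ (i,j)) g"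
      using has_contour_integral_eq by (metis (no_types, lifting))
    then show "riesz_proj g n A $$ (i,j) = (S * D * Q) $$ (i,j)"
      using i j unfolding riesz_proj_def by (simp add: cint_eq_contour_integral[OF vp] pi_neq_zero)
  qed (use S Q in \<open>auto simp: riesz_proj_def\<close>)
qed


section \<open>Deflating an invariant subspace\<close>

lemma mat_adjoint_carrier: "X \<in> carrier_mat n m \<Longrightarrow> mat_adjoint X \<in> carrier_mat m n"
  unfolding mat_adjoint_def by auto

lemma mat_adjoint_index:
  "X \<in> carrier_mat n m \<Longrightarrow> i < m \<Longrightarrow> j < n \<Longrightarrow> mat_adjoint X $$ (i,j) = conjugate (X $$ (j,i))"
  unfolding mat_adjoint_def by (auto simp: mat_of_rows_def)

lemma det_adjoint_mult_nonzero:
  fixes X :: "complex mat"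
  assumes X: "X \<in> carrier_mat n m" and L: "L \<in> carrier_mat m n" and LX: "L * X = 1\<^sub>m m"
  shows "det (mat_adjoint X * X) \<noteq> 0"
proof
  assume "det (mat_adjoint X * X) = 0"
  then obtain v where v: "v \<in> carrier_vec m" "v \<noteq> 0\<^sub>v m" and z: "(mat_adjoint X * X) *\<^sub>v v = 0\<^sub>v m"
    using det_0_iff_vec_prod_zero_field[OF mult_carrier_mat[OF mat_adjoint_carrier[OF X] X]] by auto
  define w where "w = X *\<^sub>v v"
  have w: "w \<in> carrier_vec n" unfolding w_def using X v by auto
  have Xw: "mat_adjoint X *\<^sub>v w = 0\<^sub>v m"
    using z X v unfolding w_def by (simp add: assoc_mult_mat_vec[OF mat_adjoint_carrier[OF X] X v(1)])
  have wi: "w $ i = (\<Sum>j\<in>{0..<m}. X $$ (i,j) * v $ j)" if "i < n" for i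
    unfolding w_def using that X v by (auto simp: scalar_prod_def)
  have "0 = (\<Sum>j\<in>{0..<m}. cnj (v $ j) * (mat_adjoint X *\<^sub>v w) $ j)" using Xw by simp
  also have "\<dots> = (\<Sum>j\<in>{0..<m}. cnj (v $ j) * (\<Sum>i\<in>{0..<n}. cnj (X $$ (i,j)) * w $ i))"
    using X w mat_adjoint_carrier[OF X] by (intro sum.cong refl) (auto simp: scalar_prod_def mat_adjoint_index)
  also have "\<dots> = (\<Sum>j\<in>{0..<m}. \<Sum>i\<in>{0..<n}. w $ i * cnj (X $$ (i,j) * v $ j))"
    by (simp add: sum_distrib_left mult_ac)
  also have "\<dots> = (\<Sum>i\<in>{0..<n}. \<Sum>j\<in>{0..<m}. w $ i * cnj (X $$ (i,j) * v $ j))"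
    by (rule sum.swap)
  also have "\<dots> = w \<bullet>c w"
    using w wi by (simp add: scalar_prod_def sum_distrib_left[symmetric] cnj_sum)
  finally have "w = 0\<^sub>v n" using w by simp
  then have "L *\<^sub>v w = 0\<^sub>v m" using L by (intro eq_vecI) auto
  moreover have "L *\<^sub>v w = v"
    unfolding w_def using L X v LX by (simp add: assoc_mult_mat_vec[symmetric, OF L X v(1)])
  ultimately show False using v by simp
qed

lemma rank_left_invertible:
  fixes Z :: "'a :: field mat"
  assumes Z: "Z \<in> carrier_mat n m" and L: "L \<in> carrier_mat m n" and LZ: "L * Z = 1\<^sub>m m"
  shows "vec_space.rank n Z = m"
proof -
  interpret vec_space "TYPE('a)" n .
  have dist: "distinct (cols Z)"
  proof (rule ccontr)
    assume "\<not> distinct (cols Z)"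
    then obtain i j where "i \<noteq> j" "cols Z ! i = cols Z ! j" "i < length (cols Z)" "j < length (cols Z)"
      using distinct_conv_nth by blast
    then have ij: "col Z i = col Z j" "i < m" "j < m" "i \<noteq> j" using Z by auto
    then have "col (L * Z) i = col (L * Z) j" using L Z by simp
    then have "(col (1\<^sub>m m) i :: 'a vec) $ i = col (1\<^sub>m m) j $ i" unfolding LZ by simp
    then show False using ij by simp
  qed
  have "lin_indpt (set (cols Z))"
  proof
    assume "lin_dep (set (cols Z))"
    from lin_depE[OF Z this dist] obtain v where v: "v \<in> carrier_vec m" "v \<noteq> 0\<^sub>v m" "Z *\<^sub>v v = 0\<^sub>v n" .
    have "v = (L * Z) *\<^sub>v v" using LZ v by simp
    also have "\<dots> = L *\<^sub>v (Z *\<^sub>v v)" using L Z v by simp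
    also have "\<dots> = 0\<^sub>v m" using L unfolding v(3) by (intro eq_vecI) auto
    finally show False using v by simp
  qed
  then show ?thesis using lin_indpt_full_rank[OF Z dist] by auto
qed

lemma similar_mat_square_zero:
  fixes M K :: "'a :: comm_ring_1 mat"
  assumes M: "M \<in> carrier_mat n n" and K: "K \<in> carrier_mat n n"
    and KK: "K * K = 0\<^sub>m n n" and MK: "M * K = 0\<^sub>m n n"
  shows "similar_mat M ((1\<^sub>m n - K) * M)"
proof -
  have K1: "1\<^sub>m n - K \<in> carrier_mat n n" "1\<^sub>m n + K \<in> carrier_mat n n"
    using K by (auto intro: minus_carrier_mat)
  have inv1: "(1\<^sub>m n + K) * (1\<^sub>m n - K) = 1\<^sub>m n"
  proof -
    have "(1\<^sub>m n + K) * (1\<^sub>m n - K) = (1\<^sub>m n - K) + (K - K * K)"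
      using add_mult_distrib_mat[OF one_carrier_mat K K1(1)] mult_minus_distrib_mat[OF K one_carrier_mat K] K
      by simp
    then show ?thesis unfolding KK using K by (intro eq_matI) auto
  qed
  have inv2: "(1\<^sub>m n - K) * (1\<^sub>m n + K) = 1\<^sub>m n"
  proof -
    have "(1\<^sub>m n - K) * (1\<^sub>m n + K) = (1\<^sub>m n + K) - (K + K * K)"
      using minus_mult_distrib_mat[OF one_carrier_mat K K1(2)] mult_add_distrib_mat[OF K one_carrier_mat K] K
      by simp
    then show ?thesis unfolding KK using K by (intro eq_matI) auto
  qed
  have "(1\<^sub>m n + K) * ((1\<^sub>m n - K) * M) * (1\<^sub>m n - K) = ((1\<^sub>m n + K) * (1\<^sub>m n - K)) * M * (1\<^sub>m n - K)"
    using M K1 by (simp add: assoc_mult_mat[of _ n n _ n _ n])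
  also have "\<dots> = M - M * K"
    unfolding inv1 using M mult_minus_distrib_mat[OF M one_carrier_mat K] by simp
  also have "\<dots> = M" unfolding MK using M by (intro eq_matI) auto
  finally have "M = (1\<^sub>m n + K) * ((1\<^sub>m n - K) * M) * (1\<^sub>m n - K)" ..
  then show ?thesis unfolding similar_mat_def similar_mat_wit_def Let_def
    using M K1 inv1 inv2 by (intro exI[of _ "1\<^sub>m n + K"] exI[of _ "1\<^sub>m n - K"]) auto
qed

lemma inverse_mult_commute:
  fixes A Ai P :: "'a :: semiring_1 mat"
  assumes A: "A \<in> carrier_mat n n" and Ai: "Ai \<in> carrier_mat n n" and P: "P \<in> carrier_mat n n"
    and AiA: "Ai * A = 1\<^sub>m n" and AAi: "A * Ai = 1\<^sub>m n" and PA: "P * A = A * P"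
  shows "Ai * P = P * Ai"
proof -
  have "Ai * P = Ai * P * (A * Ai)" using Ai P AAi by simp
  also have "\<dots> = Ai * (P * A) * Ai" using A Ai P by (simp add: assoc_mult_mat[of _ n n _ n _ n])
  also have "\<dots> = (Ai * A) * P * Ai" unfolding PA using A Ai P by (simp add: assoc_mult_mat[of _ n n _ n _ n])
  finally show ?thesis using AiA Ai P by simp
qed

lemma deflation_similar:
  fixes A P T :: "'a :: field mat"
  assumes A: "A \<in> carrier_mat n n" and inv: "invertible_mat A"
    and P: "P \<in> carrier_mat n n" and T: "T \<in> carrier_mat n n"
    and PA: "P * A = A * P" and TAP: "T * A * P = A * P" and PT: "P * T = T"
  shows "similar_mat ((1\<^sub>m n - T) * A) (A - P * A)"
proof -
  obtain Ai where Ai: "Ai \<in> carrier_mat n n" "Ai * A = 1\<^sub>m n" "A * Ai = 1\<^sub>m n"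
    using invertible_mat_obtain_inverse[OF A inv] .
  note [simp] = A Ai(1) P T carrier_matD[OF A] carrier_matD[OF Ai(1)] carrier_matD[OF P] carrier_matD[OF T]
    assoc_mult_mat[of _ n n _ n _ n] mult_carrier_mat[of _ n n]
  define M where "M = (1\<^sub>m n - T) * A"
  have MC[simp]: "M \<in> carrier_mat n n" unfolding M_def by (rule mult_carrier_mat[OF minus_carrier_mat[OF T] A])
  note [simp] = carrier_matD[OF MC]
  have MA: "M = A - T * A" unfolding M_def by (simp add: minus_mult_distrib_mat[OF one_carrier_mat T A])
  have MP: "M * P = 0\<^sub>m n n"
  proof -
    have "M * P = A * P - T * A * P" unfolding MA by (simp add: minus_mult_distrib_mat[OF A mult_carrier_mat[OF T A] P])
    then show ?thesis using TAP minus_r_inv_mat[OF mult_carrier_mat[OF A P]] by simp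
  qed
  have PTA: "P * (T * A) = T * A" using PT by (simp flip: assoc_mult_mat[of P n n T n A n])
  have PM: "P * M = P * A - T * A"
    using mult_minus_distrib_mat[OF P A mult_carrier_mat[OF T A]] unfolding MA PTA .
  have AiP: "Ai * P = P * Ai" using inverse_mult_commute[OF A Ai(1) P Ai(2,3) PA] .
  define K where "K = P * M * Ai"
  have KC[simp]: "K \<in> carrier_mat n n" unfolding K_def by simp
  have KP: "K * P = 0\<^sub>m n n"
  proof -
    have "K * P = P * M * (Ai * P)" unfolding K_def by simp
    also have "\<dots> = P * (M * P) * Ai" unfolding AiP by simp
    finally show ?thesis unfolding MP by simp
  qed
  have "K * K = (K * P) * M * Ai" "M * K = (M * P) * M * Ai" unfolding K_def by simp_all
  then have "similar_mat M ((1\<^sub>m n - K) * M)"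
    unfolding KP MP by (intro similar_mat_square_zero) simp_all
  moreover have "(1\<^sub>m n - K) * M = A - P * A"
  proof -
    have "K * M = K * A - K * (T * A)" unfolding MA by (rule mult_minus_distrib_mat[OF KC A mult_carrier_mat[OF T A]])
    also have "K * (T * A) = (K * P) * T * A" by (simp add: PTA)
    also have "K * A = P * M" unfolding K_def using Ai by simp
    finally have "K * M = P * M" unfolding KP by (intro eq_matI) auto
    then have "(1\<^sub>m n - K) * M = M - P * M" by (simp add: minus_mult_distrib_mat[OF one_carrier_mat KC MC])
    then show ?thesis unfolding PM by (subst (asm) MA, intro eq_matI) auto
  qed
  ultimately show ?thesis unfolding M_def by simp
qed

lemma invariant_range_restriction:
  fixes A P Z L :: "'a :: field mat"
  assumes A: "A \<in> carrier_mat n n" and inv: "invertible_mat A" and P: "P \<in> carrier_mat n n"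
    and PA: "P * A = A * P" and Z: "Z \<in> carrier_mat n s" and L: "L \<in> carrier_mat s n"
    and LZ: "L * Z = 1\<^sub>m s" and ZL: "Z * L = P"
  shows "P * Z = Z" and "A * Z = Z * (L * (A * Z))" and "det (L * (A * Z)) \<noteq> 0"
proof -
  obtain Ai where Ai: "Ai \<in> carrier_mat n n" "Ai * A = 1\<^sub>m n" "A * Ai = 1\<^sub>m n"
    using invertible_mat_obtain_inverse[OF A inv] .
  note AS = assoc_mult_mat[of _ n n _ n _ n] assoc_mult_mat[of _ n n _ n _ s] assoc_mult_mat[of _ n n _ s _ n]
    assoc_mult_mat[of _ n n _ s _ s] assoc_mult_mat[of _ n s _ n _ n] assoc_mult_mat[of _ n s _ n _ s]
    assoc_mult_mat[of _ n s _ s _ n] assoc_mult_mat[of _ n s _ s _ s] assoc_mult_mat[of _ s n _ n _ n]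
    assoc_mult_mat[of _ s n _ n _ s] assoc_mult_mat[of _ s n _ s _ n] assoc_mult_mat[of _ s n _ s _ s]
    assoc_mult_mat[of _ s s _ n _ n] assoc_mult_mat[of _ s s _ n _ s] assoc_mult_mat[of _ s s _ s _ n]
    assoc_mult_mat[of _ s s _ s _ s]
  note MC = mult_carrier_mat[of _ _ n] mult_carrier_mat[of _ _ s]
  have "P * Z = Z * (L * Z)" unfolding ZL[symmetric] using Z L by (simp add: AS)
  then show PZ: "P * Z = Z" using LZ Z by simp
  have AiP: "Ai * P = P * Ai" using inverse_mult_commute[OF A Ai(1) P Ai(2,3) PA] .
  define F where "F = L * (A * Z)"
  have F: "F \<in> carrier_mat s s" unfolding F_def using L A Z by (simp add: MC)
  have "F * (L * (Ai * Z)) = L * (A * ((Z * L) * (Ai * Z)))" unfolding F_def using L A Ai Z by (simp add: AS MC)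
  also have "\<dots> = L * (A * ((Ai * P) * Z))" unfolding ZL AiP using P Ai Z by (simp add: AS MC)
  also have "\<dots> = L * ((A * Ai) * (P * Z))" using P Ai(1) Z A by (simp add: AS MC)
  finally have "F * (L * (Ai * Z)) = 1\<^sub>m s" using Ai PZ Z LZ by simp
  then show "det (L * (A * Z)) \<noteq> 0"
    using det_mult[OF F, of "L * (Ai * Z)"] L Ai Z unfolding F_def by (auto simp: MC)
  have "Z * F = (Z * L) * (A * Z)" unfolding F_def using L A Z by (simp add: AS MC)
  also have "\<dots> = (A * P) * Z" unfolding ZL PA[symmetric] using P A Z by (simp add: AS MC)
  also have "\<dots> = A * Z" using PZ P A Z by (simp add: AS)
  finally show "A * Z = Z * (L * (A * Z))" unfolding F_def by simp
qed

lemma deflation_rank_invertible_similar: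
  fixes A P Z L :: "complex mat"
  assumes A: "A \<in> carrier_mat n n" and inv: "invertible_mat A" and P: "P \<in> carrier_mat n n"
    and PA: "P * A = A * P" and Z: "Z \<in> carrier_mat n s" and L: "L \<in> carrier_mat s n"
    and LZ: "L * Z = 1\<^sub>m s" and ZL: "Z * L = P"
  shows "vec_space.rank n Z = s \<and> invertible_mat (mat_adjoint Z * A * Z) \<and>
    similar_mat ((1\<^sub>m n - A * Z * mat_inv (mat_adjoint Z * A * Z) * mat_adjoint Z) * A) (A - P * A)"
proof -
  note restr = invariant_range_restriction[OF A inv P PA Z L LZ ZL]
  note AS = assoc_mult_mat[of _ n n _ n _ n] assoc_mult_mat[of _ n n _ n _ s] assoc_mult_mat[of _ n n _ s _ n]
    assoc_mult_mat[of _ n n _ s _ s] assoc_mult_mat[of _ n s _ n _ n] assoc_mult_mat[of _ n s _ n _ s]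
    assoc_mult_mat[of _ n s _ s _ n] assoc_mult_mat[of _ n s _ s _ s] assoc_mult_mat[of _ s n _ n _ n]
    assoc_mult_mat[of _ s n _ n _ s] assoc_mult_mat[of _ s n _ s _ n] assoc_mult_mat[of _ s n _ s _ s]
    assoc_mult_mat[of _ s s _ n _ n] assoc_mult_mat[of _ s s _ n _ s] assoc_mult_mat[of _ s s _ s _ n]
    assoc_mult_mat[of _ s s _ s _ s]
  note MC = mult_carrier_mat[of _ _ n] mult_carrier_mat[of _ _ s]
  define ZH where "ZH = mat_adjoint Z"
  have ZH: "ZH \<in> carrier_mat s n" unfolding ZH_def by (rule mat_adjoint_carrier[OF Z])
  define E where "E = ZH * A * Z"
  have E: "E \<in> carrier_mat s s" unfolding E_def using ZH A Z by (simp add: MC)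
  have "E = (ZH * Z) * (L * (A * Z))" unfolding E_def using ZH A Z L restr(2) by (simp add: AS MC)
  then have "det E \<noteq> 0"
    using det_mult[of "ZH * Z" s "L * (A * Z)"] ZH Z L A restr(3) det_adjoint_mult_nonzero[OF Z L LZ]
    unfolding ZH_def by (simp add: MC)
  then have Einv: "invertible_mat E" using invertible_mat_iff_det_nonzero[OF E] by simp
  define Ei where "Ei = mat_inv E"
  have Ei: "Ei \<in> carrier_mat s s" "Ei * E = 1\<^sub>m s"
    using mat_inv[OF E Einv] unfolding Ei_def by auto
  define T where "T = A * Z * Ei * ZH"
  have T: "T \<in> carrier_mat n n" unfolding T_def using A Z Ei ZH by (simp add: MC)
  have "T * A * P = A * (Z * (Ei * (ZH * A * Z) * L))" unfolding T_def ZL[symmetric]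
    using A Z Ei ZH L by (simp add: AS MC)
  then have TAP: "T * A * P = A * P" unfolding E_def[symmetric] using Ei L ZL by simp
  have "P * T = (P * A) * Z * Ei * ZH" unfolding T_def using P A Z Ei ZH by (simp add: AS MC)
  also have "\<dots> = A * (P * Z) * Ei * ZH" unfolding PA using P A Z by (simp add: AS MC)
  finally have PT: "P * T = T" unfolding restr(1) T_def .
  have "similar_mat ((1\<^sub>m n - T) * A) (A - P * A)"
    by (rule deflation_similar[OF A inv P T PA TAP PT])
  then show ?thesis
    using rank_left_invertible[OF Z L LZ] Einv unfolding T_def Ei_def E_def ZH_def by simp
qed


section \<open>Zero sets of multi-affine functions\<close>

definition multi_affine :: "(('i \<Rightarrow> complex) \<Rightarrow> complex) \<Rightarrow> bool" where
  "multi_affine f \<longleftrightarrow> (\<forall>y i. \<exists>\<alpha> \<beta>. \<forall>t. f (y(i := t)) = \<alpha> + t * \<beta>)"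

lemma multi_affine_fun_upd_eq:
  assumes "multi_affine f"
  shows "f (y(i := t)) = f (y(i := 0)) + t * (f (y(i := 1)) - f (y(i := 0)))"
proof -
  obtain \<alpha> \<beta> where "\<forall>t. f (y(i := t)) = \<alpha> + t * \<beta>" using assms unfolding multi_affine_def by blast
  then show ?thesis by (simp add: algebra_simps)
qed

lemma multi_affine_fun_upd:
  assumes "multi_affine f"
  shows "multi_affine (\<lambda>x. f (x(i := c)))"
  unfolding multi_affine_def
proof (intro allI)
  fix y j
  show "\<exists>\<alpha> \<beta>. \<forall>t. f ((y(j := t))(i := c)) = \<alpha> + t * \<beta>"
  proof (cases "j = i")
    case True
    then show ?thesis by (intro exI[of _ "f (y(i := c))"] exI[of _ 0]) simp
  next
    case False
    then have "\<And>t. (y(j := t))(i := c) = (y(i := c))(j := t)" by (auto simp: fun_upd_twist)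
    then show ?thesis using assms unfolding multi_affine_def by metis
  qed
qed

lemma multi_affine_diff:
  assumes "multi_affine f" "multi_affine g"
  shows "multi_affine (\<lambda>x. f x - g x)"
  unfolding multi_affine_def
proof (intro allI)
  fix y i
  obtain a1 b1 where 1: "\<forall>t. f (y(i := t)) = a1 + t * b1" using assms(1) unfolding multi_affine_def by blast
  obtain a2 b2 where 2: "\<forall>t. g (y(i := t)) = a2 + t * b2" using assms(2) unfolding multi_affine_def by blast
  show "\<exists>\<alpha> \<beta>. \<forall>t. f (y(i := t)) - g (y(i := t)) = \<alpha> + t * \<beta>"
    using 1 2 by (intro exI[of _ "a1 - a2"] exI[of _ "b1 - b2"]) (auto simp: algebra_simps)
qed

lemma emeasure_affine_zero_set:
  fixes N :: "complex measure" and a b :: complex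
  assumes "prob_space N" and "sets N = sets borel" and atom: "\<And>c. emeasure N {c} = 0"
  shows "emeasure N {t. a + t * b = 0} = (if a = 0 \<and> b = 0 then 1 else 0)"
proof -
  have "{t. a + t * b = 0} = (if b = 0 then (if a = 0 then UNIV else {}) else {- a / b})"
  proof (cases "b = 0")
    case False
    then have "a + t * b = 0 \<longleftrightarrow> t = - a / b" for t
      by (auto simp: field_simps) (metis add.commute neg_eq_iff_add_eq_0)
    then show ?thesis using False by auto
  qed simp
  moreover have "space N = UNIV" using assms(2) by (metis sets_eq_imp_space_eq space_borel)
  ultimately show ?thesis using atom prob_space.emeasure_space_1[OF assms(1)] by auto
qed

lemma emeasure_PiM_multi_affine_zero:
  fixes Mi :: "'i \<Rightarrow> complex measure"
  assumes fin: "finite I"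
    and ps: "\<And>i. prob_space (Mi i)" and sets: "\<And>i. sets (Mi i) = sets borel"
    and atom: "\<And>i a. emeasure (Mi i) {a} = 0"
  shows "f \<in> borel_measurable (PiM I Mi) \<Longrightarrow> multi_affine f \<Longrightarrow> y0 \<in> space (PiM I Mi) \<Longrightarrow> f y0 \<noteq> 0
     \<Longrightarrow> emeasure (PiM I Mi) {y \<in> space (PiM I Mi). f y = 0} = 0"
  using fin
proof (induction I arbitrary: f y0 rule: finite_induct)
  case empty
  then have "{y \<in> space (PiM {} Mi). f y = 0} = {}" by (auto simp: space_PiM)
  then show ?case by (metis emeasure_empty)
next
  case (insert i I)
  have sp: "\<And>j. space (Mi j) = UNIV" using sets by (metis sets_eq_imp_space_eq space_borel)
  interpret product_sigma_finite Mi
    unfolding product_sigma_finite_def using ps by (auto intro: prob_space_imp_sigma_finite)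
  txt \<open>Split off coordinate \<open>i\<close>: \<open>f (x(i := t)) = a x + t * b x\<close>, and the fibre over \<open>x\<close> is null
    unless \<open>a x = b x = 0\<close>.\<close>
  define a where "a x = f (x(i := 0))" for x
  define b where "b x = f (x(i := 1)) - f (x(i := 0))" for x
  have fab: "f (x(i := t)) = a x + t * b x" for x t
    unfolding a_def b_def using multi_affine_fun_upd_eq[OF insert.prems(2)] .
  have upd: "(\<lambda>x. x(i := c)) \<in> PiM I Mi \<rightarrow>\<^sub>M PiM (insert i I) Mi" for c
    by (rule measurable_fun_upd[where J = I]) (auto simp: sets measurable_ident_sets sp intro!: measurable_const)
  have am: "a \<in> borel_measurable (PiM I Mi)" and bm: "b \<in> borel_measurable (PiM I Mi)"
    unfolding a_def b_def using measurable_comp[OF upd insert.prems(1)] by (simp_all add: comp_def)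
  define X where "X = {y \<in> space (PiM (insert i I) Mi). f y = 0}"
  have Xm: "X \<in> sets (PiM (insert i I) Mi)" unfolding X_def using insert.prems(1) by measurable
  have "emeasure (PiM (insert i I) Mi) X = (\<integral>\<^sup>+ x. \<integral>\<^sup>+ t. indicator X (x(i := t)) \<partial>Mi i \<partial>PiM I Mi)"
    using Xm by (simp add: product_nn_integral_insert[OF insert.hyps] flip: nn_integral_indicator)
  also have "\<dots> = (\<integral>\<^sup>+ x. indicator {x \<in> space (PiM I Mi). a x = 0 \<and> b x = 0} x \<partial>PiM I Mi)"
  proof (rule nn_integral_cong)
    fix x assume x: "x \<in> space (PiM I Mi)"
    then have "x(i := t) \<in> space (PiM (insert i I) Mi)" for t
      using insert.hyps by (auto simp: space_PiM sp PiE_def extensional_def)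
    then have "indicator X (x(i := t)) = (indicator {t. a x + t * b x = 0} t :: ennreal)" for t
      unfolding X_def using fab by (auto simp: indicator_def)
    then have "(\<integral>\<^sup>+ t. indicator X (x(i := t)) \<partial>Mi i) = (\<integral>\<^sup>+ t. indicator {t. a x + t * b x = 0} t \<partial>Mi i)"
      by (intro nn_integral_cong) simp
    also have "\<dots> = emeasure (Mi i) {t. a x + t * b x = 0}" by (rule nn_integral_indicator) (simp add: sets)
    also have "\<dots> = indicator {x \<in> space (PiM I Mi). a x = 0 \<and> b x = 0} x"
      using x emeasure_affine_zero_set[OF ps sets atom] by (simp add: indicator_def)
    finally show "(\<integral>\<^sup>+ t. indicator X (x(i := t)) \<partial>Mi i) = indicator {x \<in> space (PiM I Mi). a x = 0 \<and> b x = 0} x" .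
  qed
  also have "\<dots> = emeasure (PiM I Mi) {x \<in> space (PiM I Mi). a x = 0 \<and> b x = 0}"
    by (rule nn_integral_indicator) (use am bm in measurable)
  also have "\<dots> = 0"
  proof -
    define x0 where "x0 = y0(i := undefined)"
    have x0: "x0 \<in> space (PiM I Mi)" using insert.prems(3) insert.hyps
      unfolding x0_def by (auto simp: space_PiM sp PiE_def extensional_def)
    have "x0(i := y0 i) = y0" unfolding x0_def by simp
    then have "a x0 \<noteq> 0 \<or> b x0 \<noteq> 0" using fab[of x0 "y0 i"] insert.prems(4) by auto
    then show ?thesis
    proof
      assume "a x0 \<noteq> 0"
      then have "emeasure (PiM I Mi) {x \<in> space (PiM I Mi). a x = 0} = 0"
        using insert.IH[OF am _ x0] multi_affine_fun_upd[OF insert.prems(2)] unfolding a_def by simp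
      then show ?thesis by (rule emeasure_eq_0[rotated]) (use am bm in auto)
    next
      assume "b x0 \<noteq> 0"
      then have "emeasure (PiM I Mi) {x \<in> space (PiM I Mi). b x = 0} = 0"
        using insert.IH[OF bm _ x0] multi_affine_diff[OF multi_affine_fun_upd multi_affine_fun_upd,
            OF insert.prems(2) insert.prems(2)] unfolding b_def by simp
      then show ?thesis by (rule emeasure_eq_0[rotated]) (use am bm in auto)
    qed
  qed
  finally show ?case unfolding X_def .
qed

lemma emeasure_distr_singleton_eq_0:
  fixes X :: "'w \<Rightarrow> complex"
  assumes X: "X \<in> borel_measurable M" and ac: "absolutely_continuous lborel (distr M lborel X)"
  shows "emeasure (distr M borel X) {a} = 0"
proof -
  have "{a} \<in> null_sets lborel" by (rule countable_imp_null_set_lborel) simp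
  then have "{a} \<in> null_sets (distr M lborel X)" using ac unfolding absolutely_continuous_def by auto
  then have "emeasure M (X -` {a} \<inter> space M) = 0" using X by (simp add: emeasure_distr null_sets_def)
  then show ?thesis using X by (simp add: emeasure_distr)
qed

lemma AE_multi_affine_nonzero:
  fixes M :: "'w measure" and Y :: "'i \<Rightarrow> 'w \<Rightarrow> complex"
  assumes prob: "prob_space M" and fin: "finite I"
    and indep: "prob_space.indep_vars M (\<lambda>_. borel) Y I"
    and ac: "\<forall>i\<in>I. absolutely_continuous lborel (distr M lborel (Y i))"
    and fm: "f \<in> borel_measurable (PiM I (\<lambda>_. borel))"
    and ma: "multi_affine f" and y0: "y0 \<in> space (PiM I (\<lambda>_. borel))" and f0: "f y0 \<noteq> 0"
  shows "AE \<omega> in M. f (\<lambda>i\<in>I. Y i \<omega>) \<noteq> 0"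
proof (cases "I = {}")
  case True
  then have "(\<lambda>i\<in>I. Y i \<omega>) = y0" for \<omega> using y0 by (auto simp: space_PiM)
  then show ?thesis using f0 by simp
next
  case False
  interpret prob_space M by (rule prob)
  have rv: "\<And>i. i \<in> I \<Longrightarrow> Y i \<in> borel_measurable M"
    using indep unfolding indep_vars_def by auto
  obtain i0 where i0: "i0 \<in> I" using False by auto
  txt \<open>Extend the family outside \<open>I\<close>, so that the product measure has only probability factors.\<close>
  define Y' where "Y' i = (if i \<in> I then Y i else Y i0)" for i
  have Y'm: "Y' i \<in> borel_measurable M" for i unfolding Y'_def using rv i0 by auto
  have indep': "indep_vars (\<lambda>_. borel) Y' I"
    using indep by (subst indep_vars_cong[of I I Y' Y]) (auto simp: Y'_def)
  define Mi where "Mi i = distr M borel (Y' i)" for i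
  have ps: "prob_space (Mi i)" for i unfolding Mi_def by (rule prob_space_distr[OF Y'm])
  have sets: "sets (Mi i) = sets borel" for i unfolding Mi_def by simp
  have atom: "emeasure (Mi i) {a} = 0" for i a
  proof -
    obtain j where j: "j \<in> I" "Y' i = Y j" using i0 unfolding Y'_def by (cases "i \<in> I") auto
    then show ?thesis unfolding Mi_def using emeasure_distr_singleton_eq_0 rv ac by metis
  qed
  define g where "g x = (\<lambda>i\<in>I. Y' i x)" for x
  have gm: "g \<in> M \<rightarrow>\<^sub>M PiM I (\<lambda>_. borel)" unfolding g_def by (rule measurable_restrict) (use Y'm in auto)
  have deq: "distr M (PiM I (\<lambda>_. borel)) g = PiM I Mi"
    using indep' unfolding Mi_def g_def by (subst (asm) indep_vars_iff_distr_eq_PiM[OF False Y'm]) simp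
  have setsP: "sets (PiM I Mi) = sets (PiM I (\<lambda>_. borel))" by (rule sets_PiM_cong) (auto simp: sets)
  have fm': "f \<in> borel_measurable (PiM I Mi)" using fm by (simp add: measurable_cong_sets[OF setsP refl])
  have y0': "y0 \<in> space (PiM I Mi)" using y0 sets_eq_imp_space_eq[OF setsP] by simp
  define Z where "Z = {y \<in> space (PiM I Mi). f y = 0}"
  have Z0: "emeasure (PiM I Mi) Z = 0" unfolding Z_def
    by (rule emeasure_PiM_multi_affine_zero[OF fin ps sets atom fm' ma y0' f0])
  have Zm: "Z \<in> sets (PiM I Mi)" unfolding Z_def using fm' by measurable
  have "emeasure M (g -` Z \<inter> space M) = emeasure (distr M (PiM I (\<lambda>_. borel)) g) Z"
    using Zm setsP gm by (simp add: emeasure_distr)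
  then have null: "g -` Z \<inter> space M \<in> null_sets M"
    using Zm setsP gm Z0 deq by (auto simp: null_sets_def intro!: measurable_sets)
  show ?thesis
  proof (rule AE_I'[OF null], safe)
    fix x assume x: "x \<in> space M" and fx: "f (\<lambda>i\<in>I. Y i x) = 0"
    have e: "g x = (\<lambda>i\<in>I. Y i x)" unfolding g_def Y'_def by (auto simp: restrict_def)
    have "g x \<in> space (PiM I Mi)" using measurable_space[OF gm x] sets_eq_imp_space_eq[OF setsP] by simp
    then show "x \<in> g -` Z" unfolding Z_def using e fx by simp
  qed
qed

lemma multi_affine_det_mult_mat:
  fixes H :: "complex mat"
  assumes H: "H \<in> carrier_mat s n"
  shows "multi_affine (\<lambda>y. det (H * mat n s y))"
  unfolding multi_affine_def
proof (intro allI)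
  fix y :: "nat \<times> nat \<Rightarrow> complex" and i :: "nat \<times> nat"
  obtain k0 j0 where i: "i = (k0, j0)" by force
  show "\<exists>\<alpha> \<beta>. \<forall>t. det (H * mat n s (y(i := t))) = \<alpha> + t * \<beta>"
  proof (cases "k0 < n \<and> j0 < s")
    case False
    then have "mat n s (y(i := t)) = mat n s y" for t unfolding i by (intro eq_matI) auto
    then show ?thesis by (intro exI[of _ "det (H * mat n s y)"] exI[of _ 0]) simp
  next
    case True
    txt \<open>Only column \<open>j\<^sub>0\<close> of \<open>H * Y\<close> depends on \<open>Y\<^sub>k\<^sub>0\<^sub>j\<^sub>0\<close>, and it does so affinely; expand along it.\<close>
    define F where "F t = H * mat n s (y(i := t))" for t
    have F: "F t \<in> carrier_mat s s" for t unfolding F_def using H by auto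
    have del: "mat_delete (F t) r j0 = mat_delete (F 0) r j0" for t r
      unfolding mat_delete_def F_def using H
      by (intro eq_matI) (auto simp: i insert_index_def scalar_prod_def intro!: sum.cong)
    have col: "F t $$ (r, j0) = F 0 $$ (r, j0) + t * H $$ (r, k0)" if "r < s" for t r
    proof -
      have "H $$ (r,k) * (y(i := t)) (k, j0) = H $$ (r,k) * (y(i := 0)) (k, j0) + (if k = k0 then t * H $$ (r,k) else 0)"
        for k unfolding i by auto
      then have "F t $$ (r, j0) = (\<Sum>k\<in>{0..<n}. H $$ (r,k) * (y(i := 0)) (k, j0) + (if k = k0 then t * H $$ (r,k) else 0))"
        unfolding F_def using that True H by (simp add: scalar_prod_def)
      also have "\<dots> = F 0 $$ (r, j0) + t * H $$ (r, k0)"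
        unfolding F_def using that True H by (simp add: sum.distrib scalar_prod_def)
      finally show ?thesis .
    qed
    have "det (F t) = (\<Sum>r<s. F 0 $$ (r,j0) * cofactor (F 0) r j0) + t * (\<Sum>r<s. H $$ (r,k0) * cofactor (F 0) r j0)" for t
    proof -
      have "det (F t) = (\<Sum>r<s. F t $$ (r,j0) * cofactor (F t) r j0)"
        by (rule laplace_expansion_column[OF F]) (use True in auto)
      also have "\<dots> = (\<Sum>r<s. (F 0 $$ (r, j0) + t * H $$ (r, k0)) * cofactor (F 0) r j0)"
        unfolding cofactor_def by (intro sum.cong refl) (simp add: del[of t] col[of _ t])
      finally show ?thesis by (simp add: algebra_simps sum.distrib sum_distrib_left)
    qed
    then show ?thesis unfolding F_def by blast
  qed
qed

lemma borel_measurable_det_mult_mat: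
  fixes H :: "complex mat"
  assumes H: "H \<in> carrier_mat s n"
  shows "(\<lambda>y. det (H * mat n s y)) \<in> borel_measurable (PiM ({0..<n} \<times> {0..<s}) (\<lambda>_. borel))"
proof -
  have "det (H * mat n s y) = (\<Sum>p \<in> {p. p permutes {0..<s}}.
      signof p * (\<Prod>r = 0..<s. \<Sum>k\<in>{0..<n}. H $$ (r,k) * y (k, p r)))" for y
    using H unfolding det_def
    by (auto intro!: sum.cong prod.cong arg_cong2[where f = "(*)"] simp: permutes_in_image scalar_prod_def)
  then show ?thesis
    by (simp only:) (intro borel_measurable_sum borel_measurable_times borel_measurable_prod
        borel_measurable_const measurable_component_singleton; auto simp: permutes_in_image)
qed

lemma AE_det_mult_random_nonzero:
  fixes M :: "'w measure" and Y :: "nat \<times> nat \<Rightarrow> 'w \<Rightarrow> complex" and H W :: "complex mat"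
  assumes prob: "prob_space M"
    and indep: "prob_space.indep_vars M (\<lambda>_. borel) Y ({0..<n} \<times> {0..<s})"
    and ac: "\<forall>ij \<in> {0..<n} \<times> {0..<s}. absolutely_continuous lborel (distr M lborel (Y ij))"
    and H: "H \<in> carrier_mat s n" and W: "W \<in> carrier_mat n s" and HW: "det (H * W) \<noteq> 0"
  shows "AE \<omega> in M. det (H * mat n s (\<lambda>(i, j). Y (i, j) \<omega>)) \<noteq> 0"
proof -
  define I where "I = {0..<n} \<times> {0..<s}"
  have restrict_mat: "mat n s (\<lambda>ij\<in>I. g ij) = mat n s g" for g :: "nat \<times> nat \<Rightarrow> complex"
    unfolding I_def by (intro eq_matI) auto
  have "AE \<omega> in M. det (H * mat n s (\<lambda>ij\<in>I. Y ij \<omega>)) \<noteq> 0"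
  proof (rule AE_multi_affine_nonzero[OF prob _ indep[folded I_def] ac[folded I_def]])
    show "(\<lambda>y. det (H * mat n s y)) \<in> borel_measurable (PiM I (\<lambda>_. borel))"
      unfolding I_def by (rule borel_measurable_det_mult_mat[OF H])
    show "(\<lambda>ij\<in>I. W $$ ij) \<in> space (PiM I (\<lambda>_. borel))" by (simp add: space_PiM)
    have "mat n s (\<lambda>ij. W $$ ij) = W" using W by (intro eq_matI) auto
    then show "det (H * mat n s (\<lambda>ij\<in>I. W $$ ij)) \<noteq> 0" using HW restrict_mat by simp
  qed (auto simp: I_def multi_affine_det_mult_mat[OF H])
  moreover have "(\<lambda>ij. Y ij \<omega>) = (\<lambda>(i, j). Y (i, j) \<omega>)" for \<omega> by auto
  ultimately show ?thesis by (simp add: restrict_mat)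
qed


section \<open>Spectral projectors of Jordan matrices\<close>

lemma spectral_projector_mult_index:
  fixes J :: "'a :: semiring_1 mat"
  assumes "J \<in> carrier_mat n n" "i < n" "j < n"
  shows "(spectral_projector J n X * J) $$ (i,j) = (if J $$ (i,i) \<in> X then J $$ (i,j) else 0)"
proof -
  have "(spectral_projector J n X * J) $$ (i,j)
      = (\<Sum>k\<in>{0..<n}. (if i = k \<and> J $$ (i,i) \<in> X then 1 else 0) * J $$ (k,j))"
    using assms unfolding spectral_projector_def by (simp add: scalar_prod_def)
  also have "\<dots> = (\<Sum>k\<in>{0..<n}. if k = i then (if J $$ (i,i) \<in> X then J $$ (i,j) else 0) else 0)"
    by (intro sum.cong) auto
  finally show ?thesis using assms(2) by simp
qed

lemma mult_spectral_projector_index: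
  fixes J :: "'a :: semiring_1 mat"
  assumes "J \<in> carrier_mat n n" "i < n" "j < n"
  shows "(J * spectral_projector J n X) $$ (i,j) = (if J $$ (j,j) \<in> X then J $$ (i,j) else 0)"
proof -
  have "(J * spectral_projector J n X) $$ (i,j)
      = (\<Sum>k\<in>{0..<n}. J $$ (i,k) * (if k = j \<and> J $$ (k,k) \<in> X then 1 else 0))"
    using assms unfolding spectral_projector_def by (simp add: scalar_prod_def)
  also have "\<dots> = (\<Sum>k\<in>{0..<n}. if k = j then (if J $$ (j,j) \<in> X then J $$ (i,j) else 0) else 0)"
    by (intro sum.cong) auto
  finally show ?thesis using assms(3) by simp
qed

lemma spectral_projector_commute:
  fixes J :: "'a :: semiring_1 mat"
  assumes js: "jordan_shaped J n"
  shows "spectral_projector J n X * J = J * spectral_projector J n X"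
proof (rule eq_matI)
  have J: "J \<in> carrier_mat n n" using js unfolding jordan_shaped_def by auto
  fix i j assume "i < dim_row (J * spectral_projector J n X)" "j < dim_col (J * spectral_projector J n X)"
  then have ij: "i < n" "j < n" using J by (auto simp: spectral_projector_def)
  have "J $$ (i,j) \<noteq> 0 \<Longrightarrow> J $$ (i,i) = J $$ (j,j)" using js ij unfolding jordan_shaped_def by auto
  then show "(spectral_projector J n X * J) $$ (i,j) = (J * spectral_projector J n X) $$ (i,j)"
    using spectral_projector_mult_index[OF J ij] mult_spectral_projector_index[OF J ij]
    by (cases "J $$ (i,j) = 0") auto
qed (use js in \<open>auto simp: jordan_shaped_def spectral_projector_def\<close>)

lemma length_filter_concat_replicate:
  "length (filter P (concat (map (\<lambda>(n,a). replicate n a) n_as)))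
     = sum_list (map fst (filter (\<lambda>(n,a). P a) n_as))"
  by (induct n_as) (auto simp: filter_replicate)

lemma prod_list_concat_replicate_deflated:
  fixes n_as :: "(nat \<times> 'a :: comm_ring_1) list"
  assumes "\<forall>(n,a) \<in> set n_as. a \<in> X \<or> a \<in> Y" and "X \<inter> Y = {}"
  shows "(\<Prod>a \<leftarrow> map (\<lambda>a. if a \<in> X then 0 else a) (concat (map (\<lambda>(n,a). replicate n a) n_as)). [:- a, 1:])
     = [:0, 1:] ^ sum_list (map fst (filter (\<lambda>(n,a). a \<in> X) n_as)) *
       (\<Prod>(n, a) \<leftarrow> filter (\<lambda>(n, a). a \<in> Y) n_as. [:- a, 1:] ^ n)"
  using assms(1)
proof (induct n_as)
  case (Cons na n_as)
  obtain n a where na: "na = (n,a)" by force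
  then consider "a \<in> X" "a \<notin> Y" | "a \<notin> X" "a \<in> Y" using Cons(2) assms(2) by auto
  then show ?case using Cons unfolding na by cases (auto simp: power_add mult_ac)
qed simp

lemma char_poly_jordan_matrix_deflated:
  fixes n_as :: "(nat \<times> 'a :: comm_ring_1) list"
  assumes "\<forall>(n,a) \<in> set n_as. a \<in> X \<or> a \<in> Y" and "X \<inter> Y = {}"
  shows "char_poly (jordan_matrix n_as - spectral_projector (jordan_matrix n_as) (sum_list (map fst n_as)) X
            * jordan_matrix n_as)
     = monom 1 (sum_list (map fst (filter (\<lambda>(n,a). a \<in> X) n_as))) *
       (\<Prod>(n, a) \<leftarrow> filter (\<lambda>(n, a). a \<in> Y) n_as. [:- a, 1:] ^ n)"
proof -
  define N where "N = sum_list (map fst n_as)"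
  define J where "J = jordan_matrix n_as"
  have J: "J \<in> carrier_mat N N" unfolding J_def N_def by simp
  have js: "jordan_shaped J N" unfolding J_def N_def by (rule jordan_shaped_jordan_matrix)
  define D where "D = spectral_projector J N X"
  have D: "D \<in> carrier_mat N N" unfolding D_def spectral_projector_def by auto
  then have DJ: "D * J \<in> carrier_mat N N" using J by auto
  note [simp] = carrier_matD[OF D]
  have idx: "(J - D * J) $$ (i,j) = (if J $$ (i,i) \<in> X then 0 else J $$ (i,j))" if "i < N" "j < N" for i j
    using that J carrier_matD[OF DJ] spectral_projector_mult_index[OF J that] unfolding D_def by simp
  have ut: "upper_triangular (J - D * J)"
    unfolding upper_triangular_def
  proof (intro allI impI)
    fix i j assume ij: "i < dim_row (J - D * J)" "j < i"
    then have N: "i < N" "j < N" using DJ by auto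
    have "J $$ (i,j) = 0"
    proof (rule ccontr)
      assume "J $$ (i,j) \<noteq> 0"
      then have "i \<le> j" using js N unfolding jordan_shaped_def by blast
      then show False using ij(2) by simp
    qed
    then show "(J - D * J) $$ (i,j) = 0" using idx[OF N] by simp
  qed
  have "diag_mat (J - D * J) = map (\<lambda>a. if a \<in> X then 0 else a) (diag_mat J)"
  proof (rule nth_equalityI)
    show "length (diag_mat (J - D * J)) = length (map (\<lambda>a. if a \<in> X then 0 else a) (diag_mat J))"
      using J DJ by (simp add: diag_mat_def)
    fix i assume "i < length (diag_mat (J - D * J))"
    then have i: "i < N" using DJ by (simp add: diag_mat_def)
    then show "diag_mat (J - D * J) ! i = map (\<lambda>a. if a \<in> X then 0 else a) (diag_mat J) ! i"
      using idx[OF i i] J DJ by (simp add: diag_mat_def)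
  qed
  then have "char_poly (J - D * J)
      = (\<Prod>a \<leftarrow> map (\<lambda>a. if a \<in> X then 0 else a) (concat (map (\<lambda>(n,a). replicate n a) n_as)). [:- a, 1:])"
    using char_poly_upper_triangular[OF minus_carrier_mat[OF DJ] ut]
    unfolding J_def diag_mat_jordan_matrix by simp
  then show ?thesis unfolding D_def J_def N_def
    using prod_list_concat_replicate_deflated[OF assms] by (simp add: monom_altdef)
qed

definition selection_mat :: "nat list \<Rightarrow> nat \<Rightarrow> 'a :: {zero,one} mat" where
  "selection_mat idx n = mat (length idx) n (\<lambda>(r,j). if j = idx ! r then 1 else 0)"

lemma selection_mat_carrier: "selection_mat idx n \<in> carrier_mat (length idx) n"
  unfolding selection_mat_def by auto

lemma selection_mat_mult_transpose:
  assumes d: "distinct idx" and b: "set idx \<subseteq> {0..<n}"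
  shows "selection_mat idx n * transpose_mat (selection_mat idx n) = (1\<^sub>m (length idx) :: 'a :: semiring_1 mat)"
proof (rule eq_matI)
  fix r r' assume "r < dim_row (1\<^sub>m (length idx) :: 'a mat)" "r' < dim_col (1\<^sub>m (length idx) :: 'a mat)"
  then have r: "r < length idx" "r' < length idx" by auto
  have "idx ! r < n" using b r(1) nth_mem by fastforce
  then have "(selection_mat idx n * transpose_mat (selection_mat idx n) :: 'a mat) $$ (r, r')
      = (if idx ! r = idx ! r' then 1 else 0)"
    unfolding selection_mat_def using r by (simp add: scalar_prod_def if_distrib[of "\<lambda>x. x * _"] cong: if_cong)
  also have "\<dots> = 1\<^sub>m (length idx) $$ (r, r')" using d r nth_eq_iff_index_eq by auto
  finally show "(selection_mat idx n * transpose_mat (selection_mat idx n) :: 'a mat) $$ (r, r')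
      = 1\<^sub>m (length idx) $$ (r, r')" .
qed (auto simp: selection_mat_def)

lemma transpose_selection_mat_mult:
  assumes d: "distinct idx"
  shows "transpose_mat (selection_mat idx n) * selection_mat idx n
     = (mat n n (\<lambda>(i,j). if i = j \<and> i \<in> set idx then 1 else 0) :: 'a :: semiring_1 mat)"
proof (rule eq_matI)
  fix i j assume "i < dim_row (mat n n (\<lambda>(i,j). if i = j \<and> i \<in> set idx then 1 else 0) :: 'a mat)"
    "j < dim_col (mat n n (\<lambda>(i,j). if i = j \<and> i \<in> set idx then 1 else 0) :: 'a mat)"
  then have ij: "i < n" "j < n" by auto
  have "(transpose_mat (selection_mat idx n) * selection_mat idx n :: 'a mat) $$ (i, j)
      = (\<Sum>r\<in>{0..<length idx}. if idx ! r = i then (if j = i then 1 else 0) else 0)"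
    unfolding selection_mat_def using ij by (auto simp: scalar_prod_def intro!: sum.cong)
  also have "\<dots> = (if i = j \<and> i \<in> set idx then 1 else 0)"
  proof (cases "i \<in> set idx")
    case True
    then obtain r0 where r0: "r0 < length idx" "idx ! r0 = i" by (auto simp: in_set_conv_nth)
    then have "\<And>r. r < length idx \<Longrightarrow> idx ! r = i \<longleftrightarrow> r = r0" using d nth_eq_iff_index_eq by metis
    then have "(\<Sum>r\<in>{0..<length idx}. if idx ! r = i then (if j = i then 1 else 0) else 0)
        = (\<Sum>r\<in>{0..<length idx}. if r = r0 then (if j = i then 1 else 0) else (0::'a))"
      by (intro sum.cong) auto
    then show ?thesis using True r0 by auto
  qed (auto intro!: sum.neutral)
  finally show "(transpose_mat (selection_mat idx n) * selection_mat idx n :: 'a mat) $$ (i, j)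
      = mat n n (\<lambda>(i,j). if i = j \<and> i \<in> set idx then 1 else 0) $$ (i, j)" using ij by simp
qed (auto simp: selection_mat_def)

lemma spectral_projector_selection_mat:
  "spectral_projector J n X = transpose_mat (selection_mat (filter (\<lambda>i. J $$ (i,i) \<in> X) [0..<n]) n)
     * (selection_mat (filter (\<lambda>i. J $$ (i,i) \<in> X) [0..<n]) n :: 'a :: semiring_1 mat)"
  unfolding transpose_selection_mat_mult[OF distinct_filter[OF distinct_upt]] spectral_projector_def
  by (intro eq_matI) auto


lemma jordan_spectral_projector_factorization:
  fixes n_as :: "(nat \<times> complex) list"
  assumes "\<forall>(n,a) \<in> set n_as. a \<in> X \<or> a \<in> Y" and "X \<inter> Y = {}"
  obtains C where "C \<in> carrier_mat (sum_list (map fst (filter (\<lambda>(n,a). a \<in> X) n_as))) (sum_list (map fst n_as))"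
    and "C * transpose_mat C = 1\<^sub>m (sum_list (map fst (filter (\<lambda>(n,a). a \<in> X) n_as)))"
    and "spectral_projector (jordan_matrix n_as) (sum_list (map fst n_as)) X = transpose_mat C * C"
    and "transpose_mat C * C * jordan_matrix n_as = jordan_matrix n_as * (transpose_mat C * C)"
    and "char_poly (jordan_matrix n_as - transpose_mat C * C * jordan_matrix n_as)
           = monom 1 (sum_list (map fst (filter (\<lambda>(n,a). a \<in> X) n_as))) *
             (\<Prod>(n, a) \<leftarrow> filter (\<lambda>(n, a). a \<in> Y) n_as. [:- a, 1:] ^ n)"
proof -
  define N where "N = sum_list (map fst n_as)"
  define J where "J = jordan_matrix n_as"
  define idx where "idx = filter (\<lambda>i. J $$ (i,i) \<in> X) [0..<N]"
  have "length idx = length (filter (\<lambda>a. a \<in> X) (diag_mat J))"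
    unfolding idx_def diag_mat_def J_def N_def by (simp add: filter_map comp_def)
  also have "\<dots> = sum_list (map fst (filter (\<lambda>(n,a). a \<in> X) n_as))"
    unfolding J_def diag_mat_jordan_matrix length_filter_concat_replicate by (simp add: case_prod_beta)
  finally have len: "length idx = sum_list (map fst (filter (\<lambda>(n,a). a \<in> X) n_as))" .
  define C :: "complex mat" where "C = selection_mat idx N"
  have D: "spectral_projector J N X = transpose_mat C * C"
    unfolding C_def idx_def by (rule spectral_projector_selection_mat)
  show ?thesis
  proof
    show "C \<in> carrier_mat (sum_list (map fst (filter (\<lambda>(n,a). a \<in> X) n_as))) (sum_list (map fst n_as))"
      unfolding C_def N_def len[symmetric] by (rule selection_mat_carrier)
    show "C * transpose_mat C = 1\<^sub>m (sum_list (map fst (filter (\<lambda>(n,a). a \<in> X) n_as)))"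
      unfolding C_def len[symmetric] by (rule selection_mat_mult_transpose) (auto simp: idx_def)
    show "spectral_projector (jordan_matrix n_as) (sum_list (map fst n_as)) X = transpose_mat C * C"
      using D unfolding J_def N_def .
    show "transpose_mat C * C * jordan_matrix n_as = jordan_matrix n_as * (transpose_mat C * C)"
      using spectral_projector_commute[OF jordan_shaped_jordan_matrix, of n_as X] D unfolding J_def N_def by simp
    show "char_poly (jordan_matrix n_as - transpose_mat C * C * jordan_matrix n_as)
        = monom 1 (sum_list (map fst (filter (\<lambda>(n,a). a \<in> X) n_as))) *
          (\<Prod>(n, a) \<leftarrow> filter (\<lambda>(n, a). a \<in> Y) n_as. [:- a, 1:] ^ n)"
      using char_poly_jordan_matrix_deflated[OF assms] D unfolding J_def N_def by simp
  qed
qed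

lemma riesz_proj_jordan_nf:
  fixes A :: "complex mat"
  assumes A: "A \<in> carrier_mat N N" and jnf: "jordan_nf A n_as"
    and curve: "pos_simple_closed_curve \<Gamma>" and on_path: "\<forall>(n, a) \<in> set n_as. a \<notin> path_image \<Gamma>"
  obtains S Q where "similar_mat_wit A (jordan_matrix n_as) S Q"
    and "riesz_proj \<Gamma> N A = S * spectral_projector (jordan_matrix n_as) N (inside (path_image \<Gamma>)) * Q"
proof -
  define J where "J = jordan_matrix n_as"
  obtain S Q where wit: "similar_mat_wit A J S Q"
    using jnf unfolding jordan_nf_def similar_mat_def J_def by auto
  then have S: "S \<in> carrier_mat N N" and Q: "Q \<in> carrier_mat N N" and J: "J \<in> carrier_mat N N"
    and SQ: "S * Q = 1\<^sub>m N" and QS: "Q * S = 1\<^sub>m N" and AJ: "A = S * J * Q"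
    unfolding similar_mat_wit_def Let_def carrier_matD(1)[OF A] by auto
  have js: "jordan_shaped J N"
    using jordan_shaped_jordan_matrix J unfolding J_def by (metis carrier_matD(1) jordan_matrix_dim(1))
  have "J $$ (i,i) \<notin> path_image \<Gamma>" if "i < N" for i
  proof -
    have "J $$ (i,i) \<in> set (diag_mat J)" using that J unfolding diag_mat_def by auto
    then show ?thesis using on_path unfolding J_def diag_mat_jordan_matrix by auto
  qed
  with riesz_proj_similar_jordan[OF S Q js SQ QS AJ curve] wit that show ?thesis unfolding J_def by blast
qed


section \<open>Deflation by a random basis of the invariant subspace\<close>

lemma similar_mat_wit_commuting_projector:
  fixes A J S Q D :: "'a :: comm_ring_1 mat"
  assumes wit: "similar_mat_wit A J S Q" and A: "A \<in> carrier_mat n n" and D: "D \<in> carrier_mat n n"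
    and DJ: "D * J = J * D"
  shows "S * D * Q * A = A * (S * D * Q)" and "similar_mat (A - S * D * Q * A) (J - D * J)"
proof -
  have S: "S \<in> carrier_mat n n" and Q: "Q \<in> carrier_mat n n" and J: "J \<in> carrier_mat n n"
    and SQ: "S * Q = 1\<^sub>m n" and QS: "Q * S = 1\<^sub>m n" and AJ: "A = S * J * Q"
    using wit unfolding similar_mat_wit_def Let_def carrier_matD(1)[OF A] by auto
  note AS = assoc_mult_mat[of _ n n _ n _ n]
  have QSX: "Q * (S * X) = X" if "X \<in> carrier_mat n n" for X
    using assoc_mult_mat[OF Q S that] QS that by simp
  have DJQ: "D * (J * Q) = J * (D * Q)"
    using assoc_mult_mat[OF D J Q] assoc_mult_mat[OF J D Q] DJ by simp
  have "S * D * Q * A = S * (D * (Q * (S * (J * Q))))" unfolding AJ using S D Q J by (simp add: AS)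
  also have "\<dots> = S * (J * (Q * (S * (D * Q))))" using QSX J D Q DJQ by simp
  also have "\<dots> = A * (S * D * Q)" unfolding AJ using S D Q J by (simp add: AS)
  finally show "S * D * Q * A = A * (S * D * Q)" .
  have DJc: "D * J \<in> carrier_mat n n" using D J by simp
  have "S * (J - D * J) * Q = S * ((J - D * J) * Q)"
    by (rule assoc_mult_mat[OF S minus_carrier_mat[OF DJc] Q])
  also have "(J - D * J) * Q = J * Q - D * J * Q" by (rule minus_mult_distrib_mat[OF J DJc Q])
  also have "S * (J * Q - D * J * Q) = S * (J * Q) - S * (D * J * Q)"
    by (rule mult_minus_distrib_mat[OF S mult_carrier_mat[OF J Q] mult_carrier_mat[OF DJc Q]])
  also have "\<dots> = A - S * D * Q * A"
    unfolding AJ using S D Q J QSX[of "J * Q"] by (simp add: AS)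
  finally have eq: "A - S * D * Q * A = S * (J - D * J) * Q" ..
  have "{A - S * D * Q * A, J - D * J, S, Q} \<subseteq> carrier_mat n n" "dim_row (A - S * D * Q * A) = n"
    using A S D Q J DJc by (auto intro!: minus_carrier_mat)
  then show "similar_mat (A - S * D * Q * A) (J - D * J)"
    unfolding similar_mat_def similar_mat_wit_def Let_def using eq SQ QS by (intro exI[of _ S] exI[of _ Q]) simp
qed

lemma projector_mult_left_inverse:
  fixes S Q B C W :: "'a :: field mat"
  assumes S: "S \<in> carrier_mat n n" and Q: "Q \<in> carrier_mat n n" and QS: "Q * S = 1\<^sub>m n"
    and B: "B \<in> carrier_mat n s" and C: "C \<in> carrier_mat s n" and CB: "C * B = 1\<^sub>m s"
    and W: "W \<in> carrier_mat n s" and dt: "det (C * Q * W) \<noteq> 0"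
  obtains L where "L \<in> carrier_mat s n" and "L * (S * (B * C) * Q * W) = 1\<^sub>m s"
    and "S * (B * C) * Q * W * L = S * (B * C) * Q"
proof -
  note AS = assoc_mult_mat[of _ n n _ n _ n] assoc_mult_mat[of _ n n _ n _ s] assoc_mult_mat[of _ n n _ s _ n]
    assoc_mult_mat[of _ n n _ s _ s] assoc_mult_mat[of _ n s _ n _ n] assoc_mult_mat[of _ n s _ n _ s]
    assoc_mult_mat[of _ n s _ s _ n] assoc_mult_mat[of _ n s _ s _ s] assoc_mult_mat[of _ s n _ n _ n]
    assoc_mult_mat[of _ s n _ n _ s] assoc_mult_mat[of _ s n _ s _ n] assoc_mult_mat[of _ s n _ s _ s]
    assoc_mult_mat[of _ s s _ n _ n] assoc_mult_mat[of _ s s _ n _ s] assoc_mult_mat[of _ s s _ s _ n]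
    assoc_mult_mat[of _ s s _ s _ s]
  note MC = mult_carrier_mat[of _ _ n] mult_carrier_mat[of _ _ s]
  txt \<open>\<open>Z = S B G\<close> with \<open>G = C Q W\<close> invertible, so \<open>G\<^sup>-\<^sup>1 C Q\<close> is a left inverse of \<open>Z\<close>.\<close>
  define G where "G = C * (Q * W)"
  have G: "G \<in> carrier_mat s s" unfolding G_def using C Q W by simp
  have "invertible_mat G" using dt C Q W invertible_mat_iff_det_nonzero[OF G] unfolding G_def by simp
  then obtain Gi where Gi: "Gi \<in> carrier_mat s s" "Gi * G = 1\<^sub>m s" "G * Gi = 1\<^sub>m s"
    using invertible_mat_obtain_inverse[OF G] by metis
  define L where "L = Gi * (C * Q)"
  have L: "L \<in> carrier_mat s n" unfolding L_def using Gi C Q by (simp add: MC)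
  have Zn: "S * (B * C) * Q * W = S * (B * G)" unfolding G_def using S B C Q W by (simp add: AS MC)
  have "L * (S * (B * G)) = Gi * (C * (Q * (S * (B * G))))" unfolding L_def using Gi C Q S B G by (simp add: AS MC)
  also have "\<dots> = Gi * G" using assoc_mult_mat[OF Q S mult_carrier_mat[OF B G]] assoc_mult_mat[OF C B G] QS CB B G by simp
  finally have LZ: "L * (S * (B * G)) = 1\<^sub>m s" using Gi by simp
  have "S * (B * G) * L = S * (B * (G * (Gi * (C * Q))))" unfolding L_def using Gi C Q S B G by (simp add: AS MC)
  also have "\<dots> = S * (B * C) * Q" using assoc_mult_mat[OF G Gi(1) mult_carrier_mat[OF C Q]] Gi(3) S B C Q
    by (simp add: AS MC)
  finally show ?thesis using that L LZ unfolding Zn by blast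
qed

lemma deflation_char_poly_jordan:
  fixes A J S Q B C W Z :: "complex mat"
  assumes A: "A \<in> carrier_mat n n" and inv: "invertible_mat A" and wit: "similar_mat_wit A J S Q"
    and B: "B \<in> carrier_mat n s" and C: "C \<in> carrier_mat s n" and CB: "C * B = 1\<^sub>m s"
    and BCJ: "B * C * J = J * (B * C)" and W: "W \<in> carrier_mat n s" and dt: "det (C * Q * W) \<noteq> 0"
    and Z: "Z = S * (B * C) * Q * W"
  shows "vec_space.rank n Z = s \<and> invertible_mat (mat_adjoint Z * A * Z) \<and>
    char_poly ((1\<^sub>m n - A * Z * mat_inv (mat_adjoint Z * A * Z) * mat_adjoint Z) * A) = char_poly (J - B * C * J)"
proof -
  have S: "S \<in> carrier_mat n n" and Q: "Q \<in> carrier_mat n n" and QS: "Q * S = 1\<^sub>m n"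
    using wit unfolding similar_mat_wit_def Let_def carrier_matD(1)[OF A] by auto
  have BC: "B * C \<in> carrier_mat n n" using B C by simp
  define P where "P = S * (B * C) * Q"
  have P: "P \<in> carrier_mat n n" unfolding P_def using S BC Q by simp
  obtain L where L: "L \<in> carrier_mat s n" "L * Z = 1\<^sub>m s" "Z * L = P"
    using projector_mult_left_inverse[OF S Q QS B C CB W dt] unfolding Z P_def by metis
  have "P * A = A * P" "similar_mat (A - P * A) (J - B * C * J)"
    using similar_mat_wit_commuting_projector[OF wit A BC] BCJ unfolding P_def by (simp_all add: assoc_mult_mat[OF B C])
  moreover have "Z \<in> carrier_mat n s" unfolding Z using P W unfolding P_def by simp
  ultimately show ?thesis
    using deflation_rank_invertible_similar[OF A inv P _ _ L] char_poly_similar similar_mat_trans by metis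
qed


theorem mainTheorem3:
  fixes A :: "complex mat" and N :: nat
    and n_as :: "(nat \<times> complex) list"
    and \<Gamma> :: "real \<Rightarrow> complex"
    and M :: "'w measure"
    and Y :: "nat \<times> nat \<Rightarrow> 'w \<Rightarrow> complex"
    and s :: nat
  assumes A: "A \<in> carrier_mat N N"
    and nonsing: "invertible_mat A"
    and jnf: "jordan_nf A n_as"
    and curve: "pos_simple_closed_curve \<Gamma>"
    and no_eig_on: "\<forall>(n, a) \<in> set n_as. a \<notin> path_image \<Gamma>"
    and in_or_out: "\<forall>(n, a) \<in> set n_as.
                      a \<in> inside (path_image \<Gamma>) \<or> a \<in> outside (path_image \<Gamma>)"
    and k_pos: "\<exists>(n, a) \<in> set n_as. a \<in> inside (path_image \<Gamma>)"
    and k_lt_d: "\<exists>(n, a) \<in> set n_as. a \<in> outside (path_image \<Gamma>)"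
    and s_def: "s = sum_list (map fst (filter (\<lambda>(n, a). a \<in> inside (path_image \<Gamma>)) n_as))"
    and prob: "prob_space M"
    and indep: "prob_space.indep_vars M (\<lambda>_. borel) Y ({0..<N} \<times> {0..<s})"
    and abs_cont: "\<forall>ij \<in> {0..<N} \<times> {0..<s}.
                     absolutely_continuous lborel (distr M lborel (Y ij))"
  shows "AE \<omega> in M.
     (let Ym = mat N s (\<lambda>(i, j). Y (i, j) \<omega>);
          Z = riesz_proj \<Gamma> N A * Ym;
          ZH = mat_adjoint Z
      in vec_space.rank N Z = s
         \<and> invertible_mat (ZH * A * Z)
         \<and> char_poly ((1\<^sub>m N - A * Z * mat_inv (ZH * A * Z) * ZH) * A)
             = monom 1 s * (\<Prod>(n, a) \<leftarrow> filter (\<lambda>(n, a). a \<in> outside (path_image \<Gamma>)) n_as.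
                              [:- a, 1:] ^ n))"
proof -
  obtain S Q where wit: "similar_mat_wit A (jordan_matrix n_as) S Q"
    and riesz: "riesz_proj \<Gamma> N A = S * spectral_projector (jordan_matrix n_as) N (inside (path_image \<Gamma>)) * Q"
    using riesz_proj_jordan_nf[OF A jnf curve no_eig_on] .
  have carrier: "{A, jordan_matrix n_as, S, Q} \<subseteq> carrier_mat N N" and QS: "Q * S = 1\<^sub>m N"
    using wit unfolding similar_mat_wit_def Let_def carrier_matD(1)[OF A] by blast+
  then have S: "S \<in> carrier_mat N N" and Q: "Q \<in> carrier_mat N N"
    and N: "N = sum_list (map fst n_as)" by (auto dest: carrier_matD(1))
  obtain C where C: "C \<in> carrier_mat s N" "C * transpose_mat C = 1\<^sub>m s"
    and proj: "spectral_projector (jordan_matrix n_as) N (inside (path_image \<Gamma>)) = transpose_mat C * C"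
    and comm: "transpose_mat C * C * jordan_matrix n_as = jordan_matrix n_as * (transpose_mat C * C)"
    and char: "char_poly (jordan_matrix n_as - transpose_mat C * C * jordan_matrix n_as)
      = monom 1 s * (\<Prod>(n, a) \<leftarrow> filter (\<lambda>(n, a). a \<in> outside (path_image \<Gamma>)) n_as. [:- a, 1:] ^ n)"
    using jordan_spectral_projector_factorization[OF in_or_out inside_Int_outside] unfolding s_def N by metis
  have "Q * (S * transpose_mat C) = transpose_mat C"
    using assoc_mult_mat[OF Q S, of "transpose_mat C" s] QS C(1) by simp
  then have "C * Q * (S * transpose_mat C) = C * transpose_mat C"
    using assoc_mult_mat[OF C(1) Q, of "S * transpose_mat C" s] S C(1) by simp
  then have "AE \<omega> in M. det (C * Q * mat N s (\<lambda>(i, j). Y (i, j) \<omega>)) \<noteq> 0"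
    using C Q S by (intro AE_det_mult_random_nonzero[OF prob indep abs_cont, of "C * Q" "S * transpose_mat C"]) auto
  then show ?thesis
    by (rule eventually_mono)
      (use deflation_char_poly_jordan[OF A nonsing wit _ C comm _ _ refl] C(1) riesz proj char
        in \<open>simp add: Let_def\<close>)
qed

end
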